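(* Let $r>1$. Then there exists $c_r>0$ such that the following holds for all positive integers $k,\ell,m$. Let $n=\ell(k+m)+1$ be the number of vertices of the $(k,\ell,m)$-superstar $S$. Choose $x_0$ uniformly at random from $V(S)$ and run the Moran process with fitness $r$ on $S$ with initial mutant $x_0$. Then the probability that the process goes extinct is at least $1/(c_r(n\log n)^{1/3})$.
   Context: Logarithms are natural. Moran process: given a directed graph $G$ and fitness $r$, one vertex $x_0$ is a mutant, the rest non-mutants. At each step a vertex $v$ is chosen with probability proportional to fitness (mutants $r$, non-mutants $1$), an out-neighbour $w$ of $v$ is chosen uniformly at random and the state of $v$ is copied to $w$. Extinction: eventually no vertex is a mutant. The $(k,\ell,m)$-superstar has vertex set the disjoint union of reservoirs $R_1,\dots,R_\ell$ of size $m$, vertices $v_{i,j}$ ($i\in[\ell]$, $j\in[k]$), and a centre $v^*$; its edges are, for each $i\in[\ell]$: from $v^*$ to every vertex of $R_i$, from every vertex of $R_i$ to $v_{i,1}$, from $v_{i,j}$ to $v_{i,j+1}$ for $j\in[k-1]$, and from $v_{i,k}$ to $v^*$. *)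

theory Defs
  imports "HOL-Probability.Probability"
begin

text \<open>A state of the Moran process is the set
  of mutant vertices. Mutants have fitness r, non-mutants fitness 1.
  One step: choose v with probability proportional to fitness (equivalently:
  with probability r|S|/(r|S|+|V-S|) choose v uniformly among mutants, otherwise
  uniformly among non-mutants), choose an out-neighbour w of v uniformly at random
  and copy the state of v to w.\<close>

definition moran_step :: "'v set \<Rightarrow> ('v \<Rightarrow> 'v \<Rightarrow> bool) \<Rightarrow> real \<Rightarrow> 'v set \<Rightarrow> 'v set pmf" where
  "moran_step V E r S =
     (if S = {} \<or> V \<subseteq> S then return_pmf S
      else bind_pmf (bernoulli_pmf (r * real (card S) / (r * real (card S) + real (card (V - S)))))
        (\<lambda>b. bind_pmf (pmf_of_set (if b then S else V - S))
          (\<lambda>v. bind_pmf (pmf_of_set {w. E v w})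
            (\<lambda>w. return_pmf (if b then insert w S else S - {w})))))"

fun moran_dist :: "'v set \<Rightarrow> ('v \<Rightarrow> 'v \<Rightarrow> bool) \<Rightarrow> real \<Rightarrow> 'v set \<Rightarrow> nat \<Rightarrow> 'v set pmf" where
  "moran_dist V E r S0 0 = return_pmf S0"
| "moran_dist V E r S0 (Suc t) = bind_pmf (moran_dist V E r S0 t) (moran_step V E r)"

text \<open>Extinction probability: probability that eventually no vertex is a mutant.
  Since the empty state is absorbing, the events "extinct at time t" increase in t,
  so this is the supremum over t of the probability of being extinct at time t.\<close>
definition extinction_prob :: "'v set \<Rightarrow> ('v \<Rightarrow> 'v \<Rightarrow> bool) \<Rightarrow> real \<Rightarrow> 'v set \<Rightarrow> real" where
  "extinction_prob V E r S0 = (SUP t. pmf (moran_dist V E r S0 t) {})"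

text \<open>Vertices (0-indexed): Res i a is the a-th vertex of reservoir R_(i+1) (i<l, a<m),
  Path i j is v_(i+1,j+1) (i<l, j<k), Centre is v*.\<close>
datatype ss_vertex = Res nat nat | Path nat nat | Centre

definition superstar_V :: "nat \<Rightarrow> nat \<Rightarrow> nat \<Rightarrow> ss_vertex set" where
  "superstar_V k l m =
     {Res i a | i a. i < l \<and> a < m} \<union> {Path i j | i j. i < l \<and> j < k} \<union> {Centre}"

fun superstar_E :: "nat \<Rightarrow> nat \<Rightarrow> nat \<Rightarrow> ss_vertex \<Rightarrow> ss_vertex \<Rightarrow> bool" where
  "superstar_E k l m Centre (Res i a) = (i < l \<and> a < m)"
| "superstar_E k l m (Res i a) (Path i' j) = (i < l \<and> a < m \<and> i' = i \<and> j = 0 \<and> 0 < k)"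
| "superstar_E k l m (Path i j) (Path i' j') = (i < l \<and> i' = i \<and> j' = Suc j \<and> Suc j < k)"
| "superstar_E k l m (Path i j) Centre = (i < l \<and> Suc j = k)"
| "superstar_E k l m _ _ = False"

end

theory Submission
  imports Defs
begin

text \<open>If a function u on states satisfies u {} \<le> 1 and u V = 0 and has nonnegative drift
  wherever it is positive, then u is a lower bound for the extinction probability (a minimal
  counterexample argument, using that the superstar is strongly connected). Explicit potentials
  of this kind give the extinction bound 1/(1+r) from every path vertex, c/l from every
  reservoir vertex, and c/k from reservoir vertices when m is large compared to r. Summing over
  the n = l(k+m)+1 initial vertices yields at least lk/(1+r) + lm max(c/l, c/k) \<ge> c' n^(2/3),
  so the average extinction probability is at least 1/(c' n^(1/3)).\<close>

section \<open>The Moran process on a general digraph\<close>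

definition out_nbrs :: "('v \<Rightarrow> 'v \<Rightarrow> bool) \<Rightarrow> 'v \<Rightarrow> 'v set" where
  "out_nbrs E v = {w. E v w}"

definition valid_moran :: "'v set \<Rightarrow> ('v \<Rightarrow> 'v \<Rightarrow> bool) \<Rightarrow> real \<Rightarrow> bool" where
  "valid_moran V E r \<longleftrightarrow>
     finite V \<and> r > 0 \<and> (\<forall>v\<in>V. finite (out_nbrs E v) \<and> out_nbrs E v \<noteq> {} \<and> out_nbrs E v \<subseteq> V)"

definition fitness :: "real \<Rightarrow> 'v set \<Rightarrow> 'v \<Rightarrow> real" where
  "fitness r S v = (if v \<in> S then r else 1)"

definition reproduce :: "'v set \<Rightarrow> 'v \<Rightarrow> 'v \<Rightarrow> 'v set" where
  "reproduce S v w = (if v \<in> S then insert w S else S - {w})"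

lemma valid_moranD:
  assumes "valid_moran V E r"
  shows "finite V" "r > 0"
    and "v \<in> V \<Longrightarrow> finite (out_nbrs E v)" "v \<in> V \<Longrightarrow> out_nbrs E v \<noteq> {}"
    and "v \<in> V \<Longrightarrow> out_nbrs E v \<subseteq> V"
  using assms unfolding valid_moran_def by auto

lemma moran_step_nontrivial:
  assumes g: "valid_moran V E r" and S: "S \<subseteq> V" "S \<noteq> {}" "\<not> V \<subseteq> S"
  shows "moran_step V E r S =
    bernoulli_pmf (r * card S / (r * card S + card (V - S))) \<bind> (\<lambda>b.
      pmf_of_set (if b then S else V - S) \<bind> (\<lambda>v.
        pmf_of_set (out_nbrs E v) \<bind> (\<lambda>w. return_pmf (reproduce S v w))))"
    (is "_ = ?rhs")
proof -
  have fin: "finite (if b then S else V - S)" "(if b then S else V - S) \<noteq> {}" for b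
    using S finite_subset[OF S(1) valid_moranD(1)[OF g]] valid_moranD(1)[OF g] by auto
  have "moran_step V E r S =
    bernoulli_pmf (r * card S / (r * card S + card (V - S))) \<bind> (\<lambda>b.
      pmf_of_set (if b then S else V - S) \<bind> (\<lambda>v.
        pmf_of_set (out_nbrs E v) \<bind> (\<lambda>w. return_pmf (if b then insert w S else S - {w}))))"
    using S by (simp add: moran_step_def out_nbrs_def)
  also have "\<dots> = ?rhs"
  proof (intro bind_pmf_cong refl)
    fix b v w assume "v \<in> set_pmf (pmf_of_set (if b then S else V - S))"
    then have "v \<in> S \<longleftrightarrow> b" using fin[of b] by (auto split: if_splits)
    then show "return_pmf (if b then insert w S else S - {w}) = return_pmf (reproduce S v w)"
      by (simp add: reproduce_def)
  qed
  finally show ?thesis .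
qed

lemma set_pmf_moran_step:
  assumes g: "valid_moran V E r" and S: "S \<subseteq> V"
  shows "set_pmf (moran_step V E r S) \<subseteq> Pow V"
proof (cases "S = {} \<or> V \<subseteq> S")
  case True
  then show ?thesis using S by (simp add: moran_step_def)
next
  case False
  note o = valid_moranD[OF g]
  have fin: "finite S" "finite (V - S)" using finite_subset[OF S o(1)] o(1) by auto
  have ne: "S \<noteq> {}" "\<not> V \<subseteq> S" using False by auto
  show ?thesis
  proof
    fix T assume "T \<in> set_pmf (moran_step V E r S)"
    then obtain b v w where v: "v \<in> set_pmf (pmf_of_set (if b then S else V - S))"
      and w: "w \<in> set_pmf (pmf_of_set (out_nbrs E v))" and T: "T = reproduce S v w"
      unfolding moran_step_nontrivial[OF g S ne] by (auto simp: set_bind_pmf)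
    have "v \<in> V" using v S fin False by (auto split: if_splits)
    then have "w \<in> V" using w o(3-5) by auto
    then show "T \<in> Pow V" using T S by (auto simp: reproduce_def)
  qed
qed

lemma expectation_bind_pmf_finite:
  fixes h :: "'b \<Rightarrow> real"
  assumes "finite (set_pmf p)" "\<And>x. x \<in> set_pmf p \<Longrightarrow> finite (set_pmf (f x))"
  shows "measure_pmf.expectation (p \<bind> f) h =
         measure_pmf.expectation p (\<lambda>x. measure_pmf.expectation (f x) h)"
  using assms
  by (subst pmf_expectation_bind[OF assms(1)]) (auto simp: integral_measure_pmf[of "set_pmf p"])

lemma expectation_moran_step:
  fixes h :: "'v set \<Rightarrow> real"
  assumes g: "valid_moran V E r" and S: "S \<subseteq> V" "S \<noteq> {}" "\<not> V \<subseteq> S"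
  shows "measure_pmf.expectation (moran_step V E r S) h =
    (\<Sum>v\<in>V. fitness r S v / card (out_nbrs E v) * (\<Sum>w\<in>out_nbrs E v. h (reproduce S v w)))
      / (\<Sum>v\<in>V. fitness r S v)"
proof -
  note o = valid_moranD[OF g]
  have fS: "finite S" and fVS: "finite (V - S)" and ne: "V - S \<noteq> {}"
    using finite_subset[OF S(1) o(1)] o(1) S by auto
  have cS: "card S > 0" and cVS: "card (V - S) > 0"
    using fS fVS S ne by (auto simp: card_gt_0_iff)
  define F where "F v = (\<Sum>w\<in>out_nbrs E v. h (reproduce S v w)) / card (out_nbrs E v)" for v
  define A where "A b = (if b then S else V - S)" for b
  define W where "W = r * card S + card (V - S)"
  have W: "W > 0" using o(2) cS cVS unfolding W_def by (simp add: add_pos_pos)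
  have AV: "A b \<subseteq> V" "finite (A b)" "A b \<noteq> {}" for b
    using S fS fVS ne unfolding A_def by auto
  have fin_branch: "finite (set_pmf (pmf_of_set (A b) \<bind>
      (\<lambda>v. pmf_of_set (out_nbrs E v) \<bind> (\<lambda>w. return_pmf (reproduce S v w)))))" for b
    using AV o(3-4) subsetD[OF AV(1)[of b]] by (auto simp: set_bind_pmf)
  have branch: "measure_pmf.expectation (pmf_of_set (A b) \<bind>
      (\<lambda>v. pmf_of_set (out_nbrs E v) \<bind> (\<lambda>w. return_pmf (reproduce S v w)))) h
    = (\<Sum>v\<in>A b. F v) / card (A b)" for b
  proof -
    have "v \<in> A b \<Longrightarrow> measure_pmf.expectation
        (pmf_of_set (out_nbrs E v) \<bind> (\<lambda>w. return_pmf (reproduce S v w))) h = F v" for v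
      using o(3-4)[of v] AV(1) unfolding F_def
      by (subst pmf_expectation_bind_pmf_of_set) (auto simp: divide_inverse mult.commute sum_distrib_left)
    moreover have "v \<in> A b \<Longrightarrow>
        finite (set_pmf (pmf_of_set (out_nbrs E v) \<bind> (\<lambda>w. return_pmf (reproduce S v w))))" for v
      using o(3-4)[of v] subsetD[OF AV(1)[of b]] by (auto simp: set_bind_pmf)
    ultimately show ?thesis
      using AV by (subst pmf_expectation_bind_pmf_of_set)
        (auto simp: divide_inverse sum_distrib_right mult.commute)
  qed
  define p where "p = r * card S / W"
  have p: "0 \<le> p" "p \<le> 1" "1 - p = card (V - S) / W"
    using o(2) W unfolding p_def W_def by (auto simp: field_simps)
  have "measure_pmf.expectation (moran_step V E r S) h
      = p * ((\<Sum>v\<in>S. F v) / card S) + (1 - p) * ((\<Sum>v\<in>V - S. F v) / card (V - S))"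
  proof -
    define B where "B b = pmf_of_set (A b) \<bind>
        (\<lambda>v. pmf_of_set (out_nbrs E v) \<bind> (\<lambda>w. return_pmf (reproduce S v w)))" for b
    have "moran_step V E r S = bernoulli_pmf p \<bind> B"
      unfolding moran_step_nontrivial[OF g S] A_def B_def p_def W_def ..
    then have "measure_pmf.expectation (moran_step V E r S) h
        = measure_pmf.expectation (bernoulli_pmf p) (\<lambda>b. measure_pmf.expectation (B b) h)"
      using fin_branch unfolding B_def by (simp add: expectation_bind_pmf_finite)
    then show ?thesis
      using p(1,2) branch[of True] branch[of False] unfolding B_def A_def by (simp add: mult.commute)
  qed
  also have "\<dots> = (r * (\<Sum>v\<in>S. F v) + (\<Sum>v\<in>V - S. F v)) / W"
    unfolding p(3) unfolding p_def using cS cVS W by (simp add: field_simps)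
  also have "r * (\<Sum>v\<in>S. F v) + (\<Sum>v\<in>V - S. F v)
      = (\<Sum>v\<in>V. fitness r S v / card (out_nbrs E v) * (\<Sum>w\<in>out_nbrs E v. h (reproduce S v w)))"
  proof -
    have "(\<Sum>v\<in>S. fitness r S v / card (out_nbrs E v) * (\<Sum>w\<in>out_nbrs E v. h (reproduce S v w)))
        = r * (\<Sum>v\<in>S. F v)"
      unfolding sum_distrib_left
      by (intro sum.cong) (auto simp: F_def fitness_def sum_divide_distrib sum_distrib_left)
    moreover have "(\<Sum>v\<in>V - S. fitness r S v / card (out_nbrs E v) * (\<Sum>w\<in>out_nbrs E v. h (reproduce S v w)))
        = (\<Sum>v\<in>V - S. F v)"
      by (intro sum.cong) (auto simp: F_def fitness_def)
    ultimately show ?thesis by (simp add: sum.subset_diff[OF S(1) o(1)])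
  qed
  also have "W = (\<Sum>v\<in>V. fitness r S v)"
    using o(1) S unfolding W_def fitness_def by (simp add: sum.If_cases Int_absorb1 Diff_eq)
  finally show ?thesis .
qed
lemma moran_dist_Suc_first: "moran_dist V E r S (Suc t) = moran_step V E r S \<bind> (\<lambda>S'. moran_dist V E r S' t)"
proof (induction t arbitrary: S)
  case 0 thus ?case by (simp add: bind_return_pmf bind_return_pmf')
next
  case (Suc t)
  have "moran_dist V E r S (Suc (Suc t)) = moran_dist V E r S (Suc t) \<bind> moran_step V E r" by simp
  also have "\<dots> = moran_step V E r S \<bind> (\<lambda>S'. moran_dist V E r S' t \<bind> moran_step V E r)"
    unfolding Suc by (simp add: bind_assoc_pmf)
  finally show ?case by simp
qed

definition extinct_by :: "'v set \<Rightarrow> ('v \<Rightarrow> 'v \<Rightarrow> bool) \<Rightarrow> real \<Rightarrow> nat \<Rightarrow> 'v set \<Rightarrow> real" where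
  "extinct_by V E r t S = pmf (moran_dist V E r S t) {}"

lemma expectation_moran_step_Pow:
  fixes h :: "'v set \<Rightarrow> real"
  assumes "valid_moran V E r" "S \<subseteq> V"
  shows "measure_pmf.expectation (moran_step V E r S) h = (\<Sum>a\<in>Pow V. h a * pmf (moran_step V E r S) a)"
  using assms set_pmf_moran_step[OF assms] valid_moranD(1)[OF assms(1)]
  by (intro integral_measure_pmf_real) auto

lemma extinct_by_Suc:
  assumes "valid_moran V E r" "S \<subseteq> V"
  shows "extinct_by V E r (Suc t) S = (\<Sum>a\<in>Pow V. extinct_by V E r t a * pmf (moran_step V E r S) a)"
  unfolding extinct_by_def moran_dist_Suc_first pmf_bind by (rule expectation_moran_step_Pow[OF assms])

lemma extinct_by_empty: "extinct_by V E r t {} = 1"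
proof -
  have "moran_dist V E r {} t = return_pmf {}"
    by (induction t) (auto simp: moran_step_def bind_return_pmf)
  thus ?thesis by (simp add: extinct_by_def)
qed

lemma extinct_by_bounds: "0 \<le> extinct_by V E r t S" "extinct_by V E r t S \<le> 1"
  unfolding extinct_by_def by (auto simp: pmf_le_1)

lemma sum_pmf_moran_step:
  assumes "valid_moran V E r" "S \<subseteq> V"
  shows "(\<Sum>a\<in>Pow V. pmf (moran_step V E r S) a) = 1"
proof -
  have "measure_pmf.expectation (moran_step V E r S) (\<lambda>_. 1::real) = 1" by simp
  thus ?thesis using expectation_moran_step_Pow[OF assms, of "\<lambda>_. 1"] by simp
qed

lemma extinct_by_mono:
  assumes g: "valid_moran V E r"
  shows "S \<subseteq> V \<Longrightarrow> extinct_by V E r t S \<le> extinct_by V E r (Suc t) S"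
proof (induction t arbitrary: S)
  case 0
  show ?case
  proof (cases "S = {}")
    case True thus ?thesis by (simp add: extinct_by_empty)
  next
    case False thus ?thesis by (simp add: extinct_by_def)
  qed
next
  case (Suc t)
  have "extinct_by V E r (Suc t) S = (\<Sum>a\<in>Pow V. extinct_by V E r t a * pmf (moran_step V E r S) a)"
    using extinct_by_Suc[OF g Suc.prems] .
  also have "\<dots> \<le> (\<Sum>a\<in>Pow V. extinct_by V E r (Suc t) a * pmf (moran_step V E r S) a)"
    by (intro sum_mono mult_right_mono Suc.IH) auto
  also have "\<dots> = extinct_by V E r (Suc (Suc t)) S" using extinct_by_Suc[OF g Suc.prems] by simp
  finally show ?case .
qed

lemma extinct_by_tendsto:
  assumes g: "valid_moran V E r" and S: "S \<subseteq> V"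
  shows "(\<lambda>t. extinct_by V E r t S) \<longlonglongrightarrow> extinction_prob V E r S"
proof -
  have "incseq (\<lambda>t. extinct_by V E r t S)" using extinct_by_mono[OF g S] by (simp add: incseq_SucI)
  moreover have "bdd_above (range (\<lambda>t. extinct_by V E r t S))" by (rule bdd_aboveI[of _ 1]) (auto simp: extinct_by_bounds)
  ultimately show ?thesis unfolding extinction_prob_def extinct_by_def[symmetric]
    by (intro LIMSEQ_incseq_SUP)
qed

lemma extinction_prob_bounds:
  assumes g: "valid_moran V E r" and S: "S \<subseteq> V"
  shows "0 \<le> extinction_prob V E r S" "extinction_prob V E r S \<le> 1"
  by (rule LIMSEQ_le_const[OF extinct_by_tendsto[OF g S]], simp add: extinct_by_bounds)
     (rule LIMSEQ_le_const2[OF extinct_by_tendsto[OF g S]], simp add: extinct_by_bounds)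

lemma extinction_prob_empty: "extinction_prob V E r {} = 1"
  unfolding extinction_prob_def extinct_by_def[symmetric] extinct_by_empty by simp

lemma extinction_prob_harmonic:
  assumes g: "valid_moran V E r" and S: "S \<subseteq> V"
  shows "extinction_prob V E r S = (\<Sum>a\<in>Pow V. extinction_prob V E r a * pmf (moran_step V E r S) a)"
proof -
  have "(\<lambda>t. extinct_by V E r (Suc t) S) \<longlonglongrightarrow> extinction_prob V E r S"
    using extinct_by_tendsto[OF g S] by (rule LIMSEQ_Suc)
  moreover have "(\<lambda>t. extinct_by V E r (Suc t) S) \<longlonglongrightarrow> (\<Sum>a\<in>Pow V. extinction_prob V E r a * pmf (moran_step V E r S) a)"
    unfolding extinct_by_Suc[OF g S]
    by (intro tendsto_sum tendsto_mult_right extinct_by_tendsto[OF g]) auto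
  ultimately show ?thesis by (rule LIMSEQ_unique)
qed

section \<open>Lower bounds on the extinction probability from potentials\<close>

text \<open>The drift of u at S is the total fitness of S times the expected one-step change of u.\<close>

definition drift_term :: "('v \<Rightarrow> 'v \<Rightarrow> bool) \<Rightarrow> real \<Rightarrow> ('v set \<Rightarrow> real) \<Rightarrow> 'v set \<Rightarrow> 'v \<Rightarrow> real" where
  "drift_term E r u S v =
     fitness r S v / card (out_nbrs E v) * (\<Sum>w\<in>out_nbrs E v. u (reproduce S v w) - u S)"

definition drift :: "'v set \<Rightarrow> ('v \<Rightarrow> 'v \<Rightarrow> bool) \<Rightarrow> real \<Rightarrow> ('v set \<Rightarrow> real) \<Rightarrow> 'v set \<Rightarrow> real" where
  "drift V E r u S = (\<Sum>v\<in>V. drift_term E r u S v)"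

lemma expectation_ge_of_drift_nonneg:
  assumes g: "valid_moran V E r" and S: "S \<subseteq> V" "S \<noteq> {}" "\<not> V \<subseteq> S"
    and d: "drift V E r u S \<ge> 0"
  shows "u S \<le> (\<Sum>T\<in>Pow V. u T * pmf (moran_step V E r S) T)"
proof -
  note o = valid_moranD[OF g]
  define A where "A = (\<Sum>v\<in>V. fitness r S v / card (out_nbrs E v) * (\<Sum>w\<in>out_nbrs E v. u (reproduce S v w)))"
  define W where "W = (\<Sum>v\<in>V. fitness r S v)"
  obtain v0 where "v0 \<in> S" using S(2) by blast
  then have W: "W > 0"
    unfolding W_def fitness_def using o(1,2) S(1) by (intro sum_pos2[of V v0]) auto
  have "drift_term E r u S v =
      fitness r S v / card (out_nbrs E v) * (\<Sum>w\<in>out_nbrs E v. u (reproduce S v w)) - u S * fitness r S v"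
    if "v \<in> V" for v
    using o(3,4)[OF that] by (simp add: drift_term_def sum_subtractf right_diff_distrib)
  then have "drift V E r u S = A - u S * W"
    unfolding drift_def A_def W_def by (simp add: sum_subtractf sum_distrib_left)
  then have "u S \<le> A / W" using d W by (simp add: field_simps)
  also have "A / W = measure_pmf.expectation (moran_step V E r S) u"
    unfolding expectation_moran_step[OF g S] A_def W_def ..
  also have "\<dots> = (\<Sum>T\<in>Pow V. u T * pmf (moran_step V E r S) T)"
    using expectation_moran_step_Pow[OF g S(1)] .
  finally show ?thesis .
qed

lemma pmf_moran_step_insert_pos:
  assumes g: "valid_moran V E r" and S: "S \<subseteq> V" "S \<noteq> {}" "\<not> V \<subseteq> S"
    and v: "v \<in> S" and w: "w \<in> out_nbrs E v"
  shows "pmf (moran_step V E r S) (insert w S) > 0"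
proof -
  note o = valid_moranD[OF g]
  have vV: "v \<in> V" using v S by auto
  define h where "h T = (if T = insert w S then 1 else 0 :: real)" for T
  have h_nonneg: "0 \<le> fitness r S v' / card (out_nbrs E v') * (\<Sum>w\<in>out_nbrs E v'. h (reproduce S v' w))" for v'
    using o(2) unfolding h_def fitness_def by (intro mult_nonneg_nonneg sum_nonneg) auto
  have "0 < fitness r S v / card (out_nbrs E v) * (\<Sum>w\<in>out_nbrs E v. h (reproduce S v w))"
  proof (intro mult_pos_pos)
    show "0 < fitness r S v / card (out_nbrs E v)"
      using o(2) o(3-4)[OF vV] v by (auto simp: fitness_def card_gt_0_iff)
    have "1 = h (reproduce S v w)" using v by (simp add: h_def reproduce_def)
    also have "\<dots> \<le> (\<Sum>w\<in>out_nbrs E v. h (reproduce S v w))"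
      using o(3)[OF vV] w unfolding h_def by (intro member_le_sum) auto
    finally show "0 < (\<Sum>w\<in>out_nbrs E v. h (reproduce S v w))" by simp
  qed
  also have "\<dots> \<le> (\<Sum>v\<in>V. fitness r S v / card (out_nbrs E v) * (\<Sum>w\<in>out_nbrs E v. h (reproduce S v w)))"
    using o(1) vV h_nonneg by (intro member_le_sum) auto
  finally have "0 < measure_pmf.expectation (moran_step V E r S) h"
    unfolding expectation_moran_step[OF g S]
    using o(1,2) S(1,2) by (intro divide_pos_pos) (auto simp: fitness_def intro!: sum_pos)
  also have "measure_pmf.expectation (moran_step V E r S) h = pmf (moran_step V E r S) (insert w S)"
    unfolding h_def by (subst integral_measure_pmf_real[of "{insert w S}"]) (simp_all split: if_splits)
  finally show ?thesis .
qed

lemma extinction_gap_min_step: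
  fixes u :: "'v set \<Rightarrow> real"
  assumes g: "valid_moran V E r" and S: "S \<subseteq> V" "S \<noteq> {}" "\<not> V \<subseteq> S"
    and d: "drift V E r u S \<ge> 0"
    and min: "\<And>T. T \<subseteq> V \<Longrightarrow> extinction_prob V E r S - u S \<le> extinction_prob V E r T - u T"
    and T: "T \<subseteq> V" "pmf (moran_step V E r S) T > 0"
  shows "extinction_prob V E r T - u T = extinction_prob V E r S - u S"
proof -
  define gap where "gap T = extinction_prob V E r T - u T" for T
  let ?p = "pmf (moran_step V E r S)"
  have fin: "finite (Pow V)" using valid_moranD(1)[OF g] by simp
  have "(\<Sum>T\<in>Pow V. (gap T - gap S) * ?p T)
      = (\<Sum>T\<in>Pow V. extinction_prob V E r T * ?p T) - (\<Sum>T\<in>Pow V. u T * ?p T)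
        - gap S * (\<Sum>T\<in>Pow V. ?p T)"
    by (simp add: gap_def algebra_simps sum_subtractf sum_distrib_left sum.distrib)
  also have "\<dots> \<le> 0"
    using extinction_prob_harmonic[OF g S(1)] expectation_ge_of_drift_nonneg[OF g S d]
      sum_pmf_moran_step[OF g S(1)]
    by (simp add: gap_def)
  finally have "(\<Sum>T\<in>Pow V. (gap T - gap S) * ?p T) = 0"
    using min by (intro antisym sum_nonneg) (auto simp: gap_def)
  then have "(gap T - gap S) * ?p T = 0"
    using min T(1) unfolding gap_def by (subst (asm) sum_nonneg_eq_0_iff[OF fin]) auto
  then show ?thesis using T(2) by (simp add: gap_def)
qed

text \<open>A minimal counterexample S (minimising the gap f - u between the extinction probability f
  and u, then maximising card S) is a nontrivial state, so by
  extinction_gap_min_step the gap is still minimal at a strictly larger successor of S.\<close>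

lemma extinction_prob_ge_potential:
  fixes u :: "'v set \<Rightarrow> real"
  assumes g: "valid_moran V E r"
    and escape: "\<And>S. S \<subseteq> V \<Longrightarrow> S \<noteq> {} \<Longrightarrow> \<not> V \<subseteq> S \<Longrightarrow> \<exists>v\<in>S. \<exists>w\<in>out_nbrs E v. w \<notin> S"
    and u_empty: "u {} \<le> 1" and u_V: "u V = 0"
    and drift: "\<And>S. S \<subseteq> V \<Longrightarrow> S \<noteq> {} \<Longrightarrow> \<not> V \<subseteq> S \<Longrightarrow> u S > 0 \<Longrightarrow> drift V E r u S \<ge> 0"
    and S0: "S0 \<subseteq> V"
  shows "u S0 \<le> extinction_prob V E r S0"
proof (rule ccontr)
  assume neg: "\<not> ?thesis"
  define gap where "gap T = extinction_prob V E r T - u T" for T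
  have fV: "finite V" using valid_moranD(1)[OF g] .
  define \<mu> where "\<mu> = Min (gap ` Pow V)"
  have \<mu>_le: "T \<subseteq> V \<Longrightarrow> \<mu> \<le> gap T" for T unfolding \<mu>_def using fV by (intro Min_le) auto
  define M where "M = {T. T \<subseteq> V \<and> gap T = \<mu>}"
  have "\<mu> \<in> gap ` Pow V" unfolding \<mu>_def using fV by (intro Min_in) auto
  then have "card ` M \<noteq> {}" "finite (card ` M)"
    using fV unfolding M_def by (auto intro: finite_subset[of _ "Pow V"])
  then obtain S where "S \<in> M" and "card S = Max (card ` M)"
    using Max_in by (metis imageE)
  then have S_max: "T \<in> M \<Longrightarrow> card T \<le> card S" for T
    using \<open>finite (card ` M)\<close> by simp
  have SV: "S \<subseteq> V" and gapS: "gap S = \<mu>" using \<open>S \<in> M\<close> unfolding M_def by auto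
  have \<mu>_neg: "\<mu> < 0" using \<mu>_le[OF S0] neg unfolding gap_def by simp
  then have uS: "u S > 0"
    using gapS extinction_prob_bounds(1)[OF g SV] unfolding gap_def by simp
  have Sne: "S \<noteq> {}"
  proof
    assume "S = {}"
    then have "gap S \<ge> 0" using u_empty extinction_prob_empty[of V E r] unfolding gap_def by simp
    then show False using gapS \<mu>_neg by simp
  qed
  have SnV: "\<not> V \<subseteq> S"
  proof
    assume "V \<subseteq> S"
    then have "S = V" using SV by blast
    then have "gap S \<ge> 0" using u_V extinction_prob_bounds(1)[OF g SV] unfolding gap_def by simp
    then show False using gapS \<mu>_neg by simp
  qed
  obtain v w where v: "v \<in> S" and w: "w \<in> out_nbrs E v" "w \<notin> S"
    using escape[OF SV Sne SnV] by blast
  have wV: "w \<in> V" using valid_moranD(5)[OF g] v w SV by auto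
  have "gap (insert w S) = gap S"
    unfolding gap_def
    by (rule extinction_gap_min_step[OF g SV Sne SnV drift[OF SV Sne SnV uS] _ _
          pmf_moran_step_insert_pos[OF g SV Sne SnV v w(1)]])
      (use \<mu>_le gapS wV SV in \<open>auto simp: gap_def\<close>)
  then have "insert w S \<in> M" using wV SV gapS unfolding M_def by auto
  then have "card (insert w S) \<le> card S" by (rule S_max)
  moreover have "card (insert w S) = card S + 1" using w finite_subset[OF SV fV] by simp
  ultimately show False by simp
qed

lemma drift_ge_sum:
  assumes "\<And>v. v \<in> V \<Longrightarrow> lb v \<le> drift_term E r u S v"
  shows "(\<Sum>v\<in>V. lb v) \<le> drift V E r u S"
  unfolding drift_def using assms by (intro sum_mono) auto

lemma drift_term_nonneg_nonmutant:
  assumes "v \<notin> S" "\<And>w. w \<in> out_nbrs E v \<Longrightarrow> u S \<le> u (S - {w})"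
  shows "0 \<le> drift_term E r u S v"
  using assms unfolding drift_term_def fitness_def reproduce_def
  by (auto intro!: divide_nonneg_nonneg sum_nonneg)

section \<open>The superstar\<close>

definition reservoirs :: "nat \<Rightarrow> nat \<Rightarrow> ss_vertex set" where
  "reservoirs l m = {Res i a | i a. i < l \<and> a < m}"

definition superstar_paths :: "nat \<Rightarrow> nat \<Rightarrow> ss_vertex set" where
  "superstar_paths k l = {Path i j | i j. i < l \<and> j < k}"

lemma reservoirs_eq_image: "reservoirs l m = (\<lambda>(i, a). Res i a) ` ({..<l} \<times> {..<m})"
  unfolding reservoirs_def by auto

lemma superstar_paths_eq_image: "superstar_paths k l = (\<lambda>(i, j). Path i j) ` ({..<l} \<times> {..<k})"
  unfolding superstar_paths_def by auto

lemma finite_reservoirs: "finite (reservoirs l m)"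
  unfolding reservoirs_eq_image by simp

lemma card_reservoirs: "card (reservoirs l m) = l * m"
  unfolding reservoirs_eq_image by (subst card_image) (auto simp: inj_on_def)

lemma card_superstar_paths: "card (superstar_paths k l) = l * k"
  unfolding superstar_paths_eq_image by (subst card_image) (auto simp: inj_on_def)

lemma superstar_V_eq: "superstar_V k l m = reservoirs l m \<union> superstar_paths k l \<union> {Centre}"
  unfolding superstar_V_def reservoirs_def superstar_paths_def by simp

lemma superstar_V_iff:
  "v \<in> superstar_V k l m \<longleftrightarrow>
     (case v of Res i a \<Rightarrow> i < l \<and> a < m | Path i j \<Rightarrow> i < l \<and> j < k | Centre \<Rightarrow> True)"
  unfolding superstar_V_def by (cases v) auto

lemma finite_superstar_V: "finite (superstar_V k l m)"
  unfolding superstar_V_eq superstar_paths_eq_image by (simp add: finite_reservoirs)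

lemma out_nbrs_Centre: "out_nbrs (superstar_E k l m) Centre = reservoirs l m"
  unfolding out_nbrs_def reservoirs_def by (auto elim: superstar_E.elims)

lemma out_nbrs_Res: "i < l \<Longrightarrow> a < m \<Longrightarrow> 0 < k \<Longrightarrow> out_nbrs (superstar_E k l m) (Res i a) = {Path i 0}"
  unfolding out_nbrs_def by (auto elim: superstar_E.elims)

lemma out_nbrs_Path: "i < l \<Longrightarrow> Suc j < k \<Longrightarrow> out_nbrs (superstar_E k l m) (Path i j) = {Path i (Suc j)}"
  unfolding out_nbrs_def by (auto elim: superstar_E.elims)

lemma out_nbrs_Path_last: "i < l \<Longrightarrow> Suc j = k \<Longrightarrow> out_nbrs (superstar_E k l m) (Path i j) = {Centre}"
  unfolding out_nbrs_def by (auto elim: superstar_E.elims)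

lemma valid_moran_superstar:
  assumes "0 < k" "0 < l" "0 < m" "r > 0"
  shows "valid_moran (superstar_V k l m) (superstar_E k l m) r"
proof -
  have "finite (out_nbrs (superstar_E k l m) v) \<and> out_nbrs (superstar_E k l m) v \<noteq> {}
      \<and> out_nbrs (superstar_E k l m) v \<subseteq> superstar_V k l m" if v: "v \<in> superstar_V k l m" for v
  proof (cases v)
    case (Res i a)
    then show ?thesis using v assms by (simp add: superstar_V_iff out_nbrs_Res)
  next
    case (Path i j)
    then show ?thesis using v assms
      by (cases "Suc j < k") (auto simp: superstar_V_iff out_nbrs_Path out_nbrs_Path_last)
  next
    case Centre
    have "Res 0 0 \<in> reservoirs l m" using assms unfolding reservoirs_def by auto
    then show ?thesis using Centre by (auto simp: out_nbrs_Centre finite_reservoirs superstar_V_eq)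
  qed
  then show ?thesis unfolding valid_moran_def using finite_superstar_V assms by auto
qed

lemma superstar_closed_Path_Centre:
  assumes closed: "\<And>v w. v \<in> S \<Longrightarrow> w \<in> out_nbrs (superstar_E k l m) v \<Longrightarrow> w \<in> S"
    and i: "i < l" and "j < k" and "Path i j \<in> S"
  shows "Centre \<in> S"
  using assms(3,4)
proof (induction "k - j" arbitrary: j)
  case 0 then show ?case by simp
next
  case (Suc d)
  show ?case
  proof (cases "Suc j < k")
    case True
    then have "Path i (Suc j) \<in> S" using closed Suc.prems(2) out_nbrs_Path[OF i True] by auto
    then show ?thesis using Suc.hyps(1)[of "Suc j"] Suc.hyps(2) True by simp
  next
    case False
    then have "Suc j = k" using Suc.prems by simp
    then show ?thesis using closed Suc.prems(2) out_nbrs_Path_last[OF i] by auto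
  qed
qed

lemma superstar_closed_eq_V:
  assumes k: "0 < k" and m: "0 < m"
    and closed: "\<And>v w. v \<in> S \<Longrightarrow> w \<in> out_nbrs (superstar_E k l m) v \<Longrightarrow> w \<in> S"
    and v: "v \<in> S" "v \<in> superstar_V k l m"
  shows "superstar_V k l m \<subseteq> S"
proof -
  have C: "Centre \<in> S"
  proof (cases v)
    case (Res i a)
    then have ia: "i < l" "a < m" using v by (auto simp: superstar_V_iff)
    then have "Path i 0 \<in> S" using closed v Res out_nbrs_Res[OF ia k] by auto
    then show ?thesis by (intro superstar_closed_Path_Centre[of S k l m i 0]) (auto intro: closed ia k)
  next
    case (Path i j)
    then show ?thesis
      using v by (intro superstar_closed_Path_Centre[of S k l m i j]) (auto intro: closed simp: superstar_V_iff)
  qed (use v in simp)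
  have R: "Res i a \<in> S" if "i < l" "a < m" for i a
    using closed[OF C] that by (auto simp: out_nbrs_Centre reservoirs_def)
  have P: "Path i j \<in> S" if i: "i < l" and "j < k" for i j
    using \<open>j < k\<close>
  proof (induction j)
    case 0
    show ?case using closed[OF R[OF i m]] out_nbrs_Res[OF i m k] by simp
  next
    case (Suc j)
    then show ?case using closed[of "Path i j"] out_nbrs_Path[OF i \<open>Suc j < k\<close>] by simp
  qed
  show ?thesis
  proof
    fix w assume "w \<in> superstar_V k l m"
    then show "w \<in> S" using C R P by (cases w) (auto simp: superstar_V_iff)
  qed
qed

lemma superstar_escape:
  assumes "0 < k" "0 < m" "S \<subseteq> superstar_V k l m" "S \<noteq> {}" "\<not> superstar_V k l m \<subseteq> S"
  shows "\<exists>v\<in>S. \<exists>w\<in>out_nbrs (superstar_E k l m) v. w \<notin> S"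
  using superstar_closed_eq_V[OF assms(1,2), of S] assms(3-5) by blast

lemma drift_term_Res:
  "i < l \<Longrightarrow> a < m \<Longrightarrow> 0 < k \<Longrightarrow> drift_term (superstar_E k l m) r u S (Res i a)
     = fitness r S (Res i a) * (u (reproduce S (Res i a) (Path i 0)) - u S)"
  unfolding drift_term_def by (simp add: out_nbrs_Res)

lemma drift_term_Path:
  "i < l \<Longrightarrow> Suc j < k \<Longrightarrow> drift_term (superstar_E k l m) r u S (Path i j)
     = fitness r S (Path i j) * (u (reproduce S (Path i j) (Path i (Suc j))) - u S)"
  unfolding drift_term_def by (simp add: out_nbrs_Path)

lemma drift_term_Path_last:
  "i < l \<Longrightarrow> Suc j = k \<Longrightarrow> drift_term (superstar_E k l m) r u S (Path i j)
     = fitness r S (Path i j) * (u (reproduce S (Path i j) Centre) - u S)"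
  unfolding drift_term_def by (simp add: out_nbrs_Path_last)

lemma drift_term_Centre:
  "drift_term (superstar_E k l m) r u S Centre
     = fitness r S Centre / (l * m) * (\<Sum>w\<in>reservoirs l m. u (reproduce S Centre w) - u S)"
  unfolding drift_term_def by (simp add: out_nbrs_Centre card_reservoirs)

lemma sum_superstar_V_delta:
  "c \<in> superstar_V k l m \<Longrightarrow> (\<Sum>v\<in>superstar_V k l m. if v = c then a else 0) = (a::real)"
  using finite_superstar_V by (simp add: sum.delta')

lemma sum_superstar_V_indicator:
  assumes "F \<subseteq> superstar_V k l m"
  shows "(\<Sum>v\<in>superstar_V k l m. if v \<in> F then a else 0) = (a::real) * card F"
  using assms finite_superstar_V by (simp add: sum.If_cases Int_absorb1)

section \<open>Lower bounds for a single initial mutant\<close>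

lemma superstar_extinction_prob_ge_potential:
  assumes "0 < k" "0 < l" "0 < m" "r > 0"
    and "u {} \<le> 1" "u (superstar_V k l m) = 0"
    and "\<And>S. S \<subseteq> superstar_V k l m \<Longrightarrow> S \<noteq> {} \<Longrightarrow> \<not> superstar_V k l m \<subseteq> S \<Longrightarrow> u S > 0 \<Longrightarrow>
           0 \<le> drift (superstar_V k l m) (superstar_E k l m) r u S"
    and "S0 \<subseteq> superstar_V k l m"
  shows "u S0 \<le> extinction_prob (superstar_V k l m) (superstar_E k l m) r S0"
  by (rule extinction_prob_ge_potential[OF valid_moran_superstar[OF assms(1-4)]
        superstar_escape[OF assms(1,3)] assms(5-8)])

definition small_potential :: "'v \<Rightarrow> 'v \<Rightarrow> real \<Rightarrow> real \<Rightarrow> 'v set \<Rightarrow> real" where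
  "small_potential x y a b S = (if S = {} then 1 else if S = {x} then a else if S = {x, y} then b else 0)"

lemma small_potential_superstar_V:
  assumes "x \<noteq> Centre" "y \<noteq> Centre"
  shows "small_potential x y a b (superstar_V k l m) = 0"
proof -
  have "Centre \<in> superstar_V k l m" by (simp add: superstar_V_iff)
  then have "superstar_V k l m \<noteq> {}" "superstar_V k l m \<noteq> {x}" "superstar_V k l m \<noteq> {x, y}"
    using assms by auto
  then show ?thesis by (simp add: small_potential_def)
qed

text \<open>On a path vertex x the mutant dies when its predecessor (of fitness 1) reproduces and
  spreads when x (of fitness r) does; these two terms balance for a = 1/(1+r).\<close>

lemma drift_Path_singleton_nonneg:
  assumes m: "0 < m" and r: "r > 0" and i: "i < l" and j: "j < k"
  defines "u \<equiv> small_potential (Path i j) (Path i j) (1 / (1 + r)) 0"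
  shows "0 \<le> drift (superstar_V k l m) (superstar_E k l m) r u {Path i j}"
proof -
  define x where "x = Path i j"
  define \<alpha> where "\<alpha> = 1 / (1 + r)"
  have \<alpha>: "0 < \<alpha>" "\<alpha> < 1" "(1 - \<alpha>) - r * \<alpha> = 0" using r unfolding \<alpha>_def by (auto simp: field_simps)
  define pred where "pred = (if j = 0 then Res i 0 else Path i (j - 1))"
  have xV: "x \<in> superstar_V k l m" using i j unfolding x_def by (simp add: superstar_V_iff)
  have pV: "pred \<in> superstar_V k l m" using i j m unfolding pred_def by (auto simp: superstar_V_iff)
  have px: "pred \<noteq> x" unfolding pred_def x_def by auto
  have u: "u {} = 1" "u {x} = \<alpha>" "S \<noteq> {} \<Longrightarrow> S \<noteq> {x} \<Longrightarrow> u S = 0" for S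
    unfolding u_def small_potential_def x_def \<alpha>_def by auto
  define lb where "lb v = (if v = pred then 1 - \<alpha> else 0) + (if v = x then - r * \<alpha> else 0)" for v
  have "(\<Sum>v\<in>superstar_V k l m. lb v) = 0"
    unfolding lb_def sum.distrib using sum_superstar_V_delta[OF pV] sum_superstar_V_delta[OF xV] \<alpha> by simp
  moreover have "(\<Sum>v\<in>superstar_V k l m. lb v) \<le> drift (superstar_V k l m) (superstar_E k l m) r u {x}"
  proof (rule drift_ge_sum)
    fix v assume "v \<in> superstar_V k l m"
    consider "v = x" | "v = pred" | "v \<noteq> x" "v \<noteq> pred" by blast
    then show "lb v \<le> drift_term (superstar_E k l m) r u {x} v"
    proof cases
      case 1
      have "insert (Path i (Suc j)) {x} \<noteq> {x}" "insert Centre {x} \<noteq> {x}" unfolding x_def by auto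
      then have "drift_term (superstar_E k l m) r u {x} v = r * (0 - \<alpha>)"
        using 1 i j u
        by (cases "Suc j < k") (auto simp: drift_term_Path drift_term_Path_last fitness_def
            reproduce_def x_def)
      then show ?thesis unfolding lb_def using 1 px by simp
    next
      case 2
      have "drift_term (superstar_E k l m) r u {x} v = 1 * (1 - \<alpha>)"
      proof (cases "j = 0")
        case True
        then show ?thesis using 2 i m j u
          by (simp add: drift_term_Res fitness_def reproduce_def pred_def x_def)
      next
        case False
        then have "Suc (j - 1) < k" "Suc (j - 1) = j" using j by auto
        then show ?thesis using 2 i False u
          by (simp add: drift_term_Path fitness_def reproduce_def pred_def x_def)
      qed
      then show ?thesis unfolding lb_def using 2 px by simp
    next
      case 3
      have "u {x} \<le> u ({x} - {w})" for w
        using \<alpha> by (cases "w = x") (simp_all add: u(1,2))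
      then have "0 \<le> drift_term (superstar_E k l m) r u {x} v"
        using 3 by (intro drift_term_nonneg_nonmutant) auto
      then show ?thesis unfolding lb_def using 3 by simp
    qed
  qed
  ultimately show ?thesis unfolding x_def by simp
qed

lemma extinction_prob_Path_ge:
  assumes "0 < k" "0 < l" "0 < m" "r > 0" "i < l" "j < k"
  shows "1 / (1 + r) \<le> extinction_prob (superstar_V k l m) (superstar_E k l m) r {Path i j}"
proof -
  let ?u = "small_potential (Path i j) (Path i j) (1 / (1 + r)) 0"
  have "?u {Path i j} \<le> extinction_prob (superstar_V k l m) (superstar_E k l m) r {Path i j}"
  proof (rule superstar_extinction_prob_ge_potential[OF assms(1-4)])
    show "?u {} \<le> 1" by (simp add: small_potential_def)
    show "?u (superstar_V k l m) = 0" by (rule small_potential_superstar_V) simp_all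
    show "{Path i j} \<subseteq> superstar_V k l m" using assms(5,6) by (simp add: superstar_V_iff)
    fix S assume "0 < ?u S" "S \<noteq> {}"
    then have "S = {Path i j}" by (simp add: small_potential_def split: if_splits)
    then show "0 \<le> drift (superstar_V k l m) (superstar_E k l m) r ?u S"
      using drift_Path_singleton_nonneg[OF assms(3-6)] by simp
  qed
  then show ?thesis by (simp add: small_potential_def)
qed

lemma out_nbrs_superstar_not_Res:
  assumes "v \<in> superstar_V k l m" "v \<noteq> Centre" "w \<in> out_nbrs (superstar_E k l m) v" "0 < k"
  shows "w \<noteq> Res i a"
proof (cases v)
  case (Path i' j)
  then show ?thesis
    using assms by (cases "Suc j < k") (auto simp: superstar_V_iff out_nbrs_Path out_nbrs_Path_last)
qed (use assms in \<open>auto simp: superstar_V_iff out_nbrs_Res\<close>)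

lemma sum_reservoirs_delta:
  "c \<in> reservoirs l m \<Longrightarrow> (\<Sum>w\<in>reservoirs l m. if w = c then a else 0) = (a::real)"
  using finite_reservoirs by (simp add: sum.delta')

locale superstar_reservoir =
  fixes k l m :: nat and r :: real and i a0 :: nat
  assumes k: "0 < k" and r_pos: "0 < r" and i: "i < l" and a0: "a0 < m"
begin

abbreviation "VV \<equiv> superstar_V k l m"
abbreviation "x \<equiv> Res i a0"

lemma x_in_V: "x \<in> VV" and x_in_reservoirs: "x \<in> reservoirs l m"
  and Centre_in_V: "Centre \<in> VV" and Path_in_V: "j < k \<Longrightarrow> Path i j \<in> VV"
  using i a0 by (simp_all add: superstar_V_iff reservoirs_def)

lemma drift_term_Centre_single_reservoir:
  assumes "Centre \<notin> S" "\<And>w. w \<in> reservoirs l m \<Longrightarrow> w \<noteq> x \<Longrightarrow> w \<notin> S"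
  shows "drift_term (superstar_E k l m) r u S Centre = (u (S - {x}) - u S) / (l * m)"
proof -
  have "u (reproduce S Centre w) - u S = (if w = x then u (S - {x}) - u S else 0)"
    if "w \<in> reservoirs l m" for w
    using assms that by (auto simp: reproduce_def)
  then show ?thesis
    using assms(1) x_in_reservoirs
    by (simp add: drift_term_Centre fitness_def sum_reservoirs_delta cong: sum.cong)
qed

end

text \<open>The first bound, of order 1/l, is good when l is small. Besides {} and {x}, the potential
  charges {x, v_(i,1)}, with the value ext_pair that makes its drift there nonnegative.\<close>

locale small_branch_count = superstar_reservoir
begin

definition "ext_x = 1 / (1 + l * r * (r + 1))"
definition "ext_pair = (m - 1) * ext_x / (m + r)"
definition "u = small_potential x (Path i 0) ext_x ext_pair"

lemma ext_x: "0 < ext_x" "ext_x \<le> 1" "1 - ext_x = l * r * (r + 1) * ext_x"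
proof -
  have "0 \<le> l * r * (r + 1)" using r_pos by simp
  then show "0 < ext_x" "ext_x \<le> 1" "1 - ext_x = l * r * (r + 1) * ext_x"
    unfolding ext_x_def by (auto simp: field_simps)
qed

lemma ext_pair: "0 \<le> ext_pair" "ext_pair \<le> ext_x" "ext_pair * (m + r) = (m - 1) * ext_x"
  using ext_x r_pos a0 unfolding ext_pair_def by (auto simp: field_simps)

lemma u_simps: "u {} = 1" "u {x} = ext_x" "u {x, Path i 0} = ext_pair"
  "S \<noteq> {} \<Longrightarrow> S \<noteq> {x} \<Longrightarrow> S \<noteq> {x, Path i 0} \<Longrightarrow> u S = 0"
  unfolding u_def small_potential_def by auto

lemma drift_term_off_Centre_nonneg:
  assumes S: "S = {x} \<or> S = {x, Path i 0}" and v: "v \<in> VV" "v \<notin> S" "v \<noteq> Centre"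
  shows "0 \<le> drift_term (superstar_E k l m) r u S v"
proof (rule drift_term_nonneg_nonmutant[OF v(2)])
  fix w assume "w \<in> out_nbrs (superstar_E k l m) v"
  then have "w \<noteq> x" using out_nbrs_superstar_not_Res[OF v(1,3) _ k] by blast
  then show "u S \<le> u (S - {w})"
    using S ext_x ext_pair by (cases "w = Path i 0") (auto simp: u_simps insert_Diff_if)
qed

lemma drift_singleton_nonneg: "0 \<le> drift VV (superstar_E k l m) r u {x}"
proof -
  define lb where "lb v = (if v = Centre then (1 - ext_x) / (l * m) else 0)
      + (if v = x then r * (ext_pair - ext_x) else 0)" for v
  have "(\<Sum>v\<in>VV. lb v) \<le> drift VV (superstar_E k l m) r u {x}"
  proof (rule drift_ge_sum)
    fix v assume v: "v \<in> VV"
    consider "v = Centre" | "v = x" | "v \<noteq> Centre" "v \<noteq> x" by blast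
    then show "lb v \<le> drift_term (superstar_E k l m) r u {x} v"
    proof cases
      case 1
      then show ?thesis
        using drift_term_Centre_single_reservoir[of "{x}" u] by (simp add: lb_def u_simps)
    next
      case 2
      have "insert (Path i 0) {x} = {x, Path i 0}" by auto
      then show ?thesis
        using 2 i a0 k by (simp add: lb_def drift_term_Res fitness_def reproduce_def u_simps)
    next
      case 3
      then show ?thesis using drift_term_off_Centre_nonneg[of "{x}" v] v by (simp add: lb_def)
    qed
  qed
  moreover have "0 \<le> (\<Sum>v\<in>VV. lb v)"
  proof -
    have "r * (r + 1) * ext_x / (m + r) \<le> r * (r + 1) * ext_x / m"
      using r_pos a0 ext_x by (intro divide_left_mono) auto
    also have "\<dots> = (1 - ext_x) / (l * m)" unfolding ext_x(3) using i a0 by (simp add: field_simps)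
    finally have "r * (r + 1) * ext_x / (m + r) \<le> (1 - ext_x) / (l * m)" .
    moreover have "r * (ext_pair - ext_x) = - r * (r + 1) * ext_x / (m + r)"
      using r_pos a0 unfolding ext_pair_def by (simp add: field_simps of_nat_diff)
    ultimately show ?thesis
      unfolding lb_def sum.distrib using sum_superstar_V_delta[OF Centre_in_V] sum_superstar_V_delta[OF x_in_V]
      by simp
  qed
  ultimately show ?thesis by simp
qed

lemma drift_pair_nonneg: "0 \<le> drift VV (superstar_E k l m) r u {x, Path i 0}"
proof -
  define S where "S = {x, Path i 0}"
  define Fam where "Fam = {Res i a | a. a < m \<and> a \<noteq> a0}"
  have Fam_V: "Fam \<subseteq> VV" using i unfolding Fam_def by (auto simp: superstar_V_iff)
  have "Fam = (\<lambda>a. Res i a) ` ({..<m} - {a0})" unfolding Fam_def by auto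
  then have card_Fam: "card Fam = m - 1" using a0 by (simp add: card_image inj_on_def)
  define lb where "lb v = (if v \<in> Fam then ext_x - ext_pair else 0)
      + (if v = Path i 0 then - r * ext_pair else 0) + (if v = Centre then - ext_pair / (l * m) else 0)" for v
  have "(\<Sum>v\<in>VV. lb v) \<le> drift VV (superstar_E k l m) r u S"
  proof (rule drift_ge_sum)
    fix v assume v: "v \<in> VV"
    have neq: "Path i 0 \<notin> Fam" "Centre \<notin> Fam" "x \<notin> Fam" unfolding Fam_def by auto
    consider "v = Centre" | "v \<in> Fam" | "v = Path i 0" | "v = x"
      | "v \<noteq> Centre" "v \<notin> Fam" "v \<noteq> Path i 0" "v \<noteq> x" by blast
    then show "lb v \<le> drift_term (superstar_E k l m) r u S v"
    proof cases
      case 1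
      have "drift_term (superstar_E k l m) r u S Centre = (u (S - {x}) - u S) / (l * m)"
        by (rule drift_term_Centre_single_reservoir) (auto simp: S_def reservoirs_def)
      moreover have "S - {x} = {Path i 0}" "{Path i 0} \<noteq> {x}" "{Path i 0} \<noteq> {x, Path i 0}"
        unfolding S_def by auto
      ultimately show ?thesis using 1 neq by (simp add: lb_def u_simps S_def)
    next
      case 2
      then obtain a where a: "v = Res i a" "a < m" "a \<noteq> a0" unfolding Fam_def by auto
      have "S - {Path i 0} = {x}" unfolding S_def by auto
      then show ?thesis
        using 2 a i k neq by (simp add: lb_def drift_term_Res fitness_def reproduce_def u_simps S_def)
    next
      case 3
      have u_ins: "u (insert w S) = 0" if "w \<notin> S" for w
      proof (rule u_simps(4))
        show "insert w S \<noteq> {x}" unfolding S_def by auto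
        show "insert w S \<noteq> {x, Path i 0}" using that unfolding S_def by auto
      qed simp
      have P0S: "Path i 0 \<in> S" unfolding S_def by simp
      have "drift_term (superstar_E k l m) r u S (Path i 0) = r * (0 - ext_pair)"
      proof (cases "Suc 0 < k")
        case True
        have "Path i (Suc 0) \<notin> S" unfolding S_def by simp
        then show ?thesis
          using True i P0S u_ins by (simp add: drift_term_Path fitness_def reproduce_def u_simps S_def)
      next
        case False
        then have "Suc 0 = k" using k by simp
        moreover have "Centre \<notin> S" unfolding S_def by simp
        ultimately show ?thesis
          using i P0S u_ins by (simp add: drift_term_Path_last fitness_def reproduce_def u_simps S_def)
      qed
      then show ?thesis using 3 neq by (simp add: lb_def)
    next
      case 4
      have "insert (Path i 0) S = S" unfolding S_def by auto
      then show ?thesis using 4 i a0 k neq by (simp add: lb_def drift_term_Res fitness_def reproduce_def S_def)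
    next
      case 5
      then show ?thesis using drift_term_off_Centre_nonneg[of S v] v by (simp add: lb_def S_def)
    qed
  qed
  moreover have "0 \<le> (\<Sum>v\<in>VV. lb v)"
  proof -
    have "(1::real) \<le> real l" "(1::real) \<le> real m" using i a0 by auto
    then have "1 * 1 \<le> real l * real m" by (intro mult_mono) auto
    then have "ext_pair / (l * m) \<le> ext_pair / 1" using ext_pair(1) by (intro divide_left_mono) auto
    moreover have "(ext_x - ext_pair) * (real m - 1) - r * ext_pair - ext_pair
        = (real m - 1) * ext_x - ext_pair * (m + r)"
      by (simp add: algebra_simps)
    ultimately show ?thesis
      unfolding lb_def sum.distrib
      using sum_superstar_V_delta[OF Centre_in_V] sum_superstar_V_delta[OF Path_in_V[OF k]]
        sum_superstar_V_indicator[OF Fam_V] card_Fam a0 ext_pair(3)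
      by (simp add: of_nat_diff)
  qed
  ultimately show ?thesis unfolding S_def by simp
qed

lemma extinction_prob_x_ge: "ext_x \<le> extinction_prob VV (superstar_E k l m) r {x}"
proof -
  have "u {x} \<le> extinction_prob VV (superstar_E k l m) r {x}"
  proof (rule superstar_extinction_prob_ge_potential)
    show "0 < k" "0 < l" "0 < m" "0 < r" using k i a0 r_pos by auto
    show "u {} \<le> 1" by (simp add: u_simps)
    show "u VV = 0" unfolding u_def by (rule small_potential_superstar_V) simp_all
    show "{x} \<subseteq> VV" using x_in_V by simp
    fix S assume "0 < u S" "S \<noteq> {}"
    then have "S = {x} \<or> S = {x, Path i 0}" using u_simps(4) by (metis less_irrefl)
    then show "0 \<le> drift VV (superstar_E k l m) r u S"
      using drift_singleton_nonneg drift_pair_nonneg by blast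
  qed
  then show ?thesis by (simp add: u_simps)
qed

end

lemma extinction_prob_Res_ge_inv_l_small:
  assumes "0 < k" "0 < r" "i < l" "a < m"
  shows "1 / (1 + l * r * (r + 1)) \<le> extinction_prob (superstar_V k l m) (superstar_E k l m) r {Res i a}"
proof -
  interpret small_branch_count k l m r i a using assms by unfold_locales
  show ?thesis using extinction_prob_x_ge unfolding ext_x_def .
qed

section \<open>A potential for a reservoir mutant when l is large\<close>

text \<open>For a set B \<subseteq> {..<k} of occupied path positions, min_or k B is the position of the first
  mutant on the path (k if there is none); min_pos_or k B ignores position 0.\<close>

definition min_or :: "nat \<Rightarrow> nat set \<Rightarrow> nat" where
  "min_or k B = (if B = {} then k else Min B)"

abbreviation min_pos_or :: "nat \<Rightarrow> nat set \<Rightarrow> nat" where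
  "min_pos_or k B \<equiv> min_or k (B - {0})"

context
  fixes k :: nat and B :: "nat set"
  assumes Bk: "B \<subseteq> {..<k}"
begin

lemma min_or_le: "min_or k B \<le> k"
proof (cases "B = {}")
  case False
  then have "Min B \<in> B" using finite_subset[OF Bk finite_lessThan] by (intro Min_in)
  then show ?thesis using Bk False by (auto simp: min_or_def)
qed (simp add: min_or_def)

lemma min_or_mem: "B \<noteq> {} \<Longrightarrow> min_or k B \<in> B"
  using finite_subset[OF Bk finite_lessThan] by (simp add: min_or_def)

lemma min_or_le_mem: "j \<in> B \<Longrightarrow> min_or k B \<le> j"
  using finite_subset[OF Bk finite_lessThan] by (auto simp: min_or_def)

lemma min_or_insert_Suc: "j \<in> B \<Longrightarrow> min_or k (insert (Suc j) B) = min_or k B"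
  using finite_subset[OF Bk finite_lessThan] min_or_le_mem[of j]
  by (auto simp: min_or_def Min_insert min_def)

lemma min_or_remove: "min_or k B \<le> min_or k (B - {j})"
proof (cases "B - {j} = {}")
  case True
  then show ?thesis using min_or_le by (simp add: min_or_def)
next
  case False
  then have "min_or k (B - {j}) \<in> B"
    using finite_subset[OF Bk finite_lessThan] Min_in[of "B - {j}"] by (simp add: min_or_def)
  then show ?thesis by (rule min_or_le_mem)
qed

lemma min_or_remove_min:
  assumes "B \<noteq> {}"
  shows "Suc (min_or k B) \<le> min_or k (B - {min_or k B})"
proof (cases "B - {min_or k B} = {}")
  case True
  have "min_or k B < k" using Bk min_or_mem[OF assms] by auto
  moreover have "min_or k (B - {min_or k B}) = k" using True by (simp add: min_or_def)
  ultimately show ?thesis by simp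
next
  case False
  have "min_or k (B - {min_or k B}) = Min (B - {min_or k B})"
    using False unfolding min_or_def[of k "B - {min_or k B}"] by simp
  then have "min_or k (B - {min_or k B}) \<in> B - {min_or k B}"
    using Min_in[OF _ False] finite_subset[OF Bk finite_lessThan] by simp
  then show ?thesis using min_or_le_mem by (metis DiffD1 DiffD2 insertI1 le_antisym not_less_eq_eq)
qed

end

lemma min_pos_or_ge_1:
  assumes "B \<subseteq> {..<k}" "0 < k"
  shows "1 \<le> min_pos_or k B"
proof (cases "B - {0} = {}")
  case False
  then have "min_pos_or k B \<in> B - {0}" using assms(1) by (intro min_or_mem) auto
  then show ?thesis by simp
qed (use assms(2) in \<open>simp add: min_or_def\<close>)

lemma min_pos_or_le: "B \<subseteq> {..<k} \<Longrightarrow> min_pos_or k B \<le> k"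
  by (rule min_or_le) auto

lemma min_pos_or_mem:
  assumes "B \<subseteq> {..<k}" "B - {0} \<noteq> {}"
  shows "min_pos_or k B \<in> B \<and> min_pos_or k B \<noteq> 0 \<and> min_pos_or k B < k"
proof -
  have "min_pos_or k B \<in> B - {0}" using assms by (intro min_or_mem) auto
  then show ?thesis using assms(1) by auto
qed

lemma min_pos_or_le_mem: "B \<subseteq> {..<k} \<Longrightarrow> j \<in> B \<Longrightarrow> j \<noteq> 0 \<Longrightarrow> min_pos_or k B \<le> j"
  by (rule min_or_le_mem) auto

lemma min_pos_or_zero: "min_pos_or k (insert 0 B) = min_pos_or k B" "min_pos_or k (B - {0}) = min_pos_or k B"
proof -
  have "insert 0 B - {0} = B - {0}" "B - {0} - {0} = B - {0}" by auto
  then show "min_pos_or k (insert 0 B) = min_pos_or k B" "min_pos_or k (B - {0}) = min_pos_or k B"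
    by simp_all
qed

lemma min_pos_or_insert_Suc:
  assumes "B \<subseteq> {..<k}" "j \<in> B" "j \<noteq> 0"
  shows "min_pos_or k (insert (Suc j) B) = min_pos_or k B"
proof -
  have "insert (Suc j) B - {0} = insert (Suc j) (B - {0})" by auto
  moreover have "min_or k (insert (Suc j) (B - {0})) = min_pos_or k B"
    using assms by (intro min_or_insert_Suc) auto
  ultimately show ?thesis by simp
qed

lemma min_pos_or_remove:
  assumes "B \<subseteq> {..<k}"
  shows "min_pos_or k B \<le> min_pos_or k (B - {j})"
proof -
  have "B - {j} - {0} = B - {0} - {j}" by auto
  moreover have "min_pos_or k B \<le> min_or k (B - {0} - {j})"
    using assms by (intro min_or_remove) auto
  ultimately show ?thesis by simp
qed

lemma min_pos_or_remove_min:
  assumes "B \<subseteq> {..<k}" "B - {0} \<noteq> {}"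
  shows "Suc (min_pos_or k B) \<le> min_pos_or k (B - {min_pos_or k B})"
proof -
  have "B - {min_pos_or k B} - {0} = B - {0} - {min_pos_or k B}" by auto
  moreover have "Suc (min_pos_or k B) \<le> min_or k (B - {0} - {min_pos_or k B})"
    using assms by (intro min_or_remove_min) auto
  ultimately show ?thesis by simp
qed
text \<open>The second bound is good when l is large. On configurations confined to x = Res i a0,
  branch i and the centre the potential is pot_x while x is a mutant and pot_gone afterwards;
  both decrease linearly in the distance from the first mutant on branch i to the centre and
  in the presence of a mutant centre. The constants are tuned so that the positive part u of
  the potential has nonnegative drift; drift_lb_x and drift_lb_gone are vertexwise lower
  bounds for the drift terms.\<close>

locale reservoir_potential = superstar_reservoir +
  assumes r: "1 < r" and m_large: "4 * r \<le> real m - 1" and l_large: "2 * r * (r * k + 1) \<le> real l - 1"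
begin

definition confined :: "ss_vertex set \<Rightarrow> bool" where
  "confined S \<longleftrightarrow> S \<subseteq> VV \<and> (\<forall>v\<in>S. v = x \<or> v = Centre \<or> (\<exists>j. v = Path i j))"

definition occ :: "ss_vertex set \<Rightarrow> nat set" where "occ S = {j. Path i j \<in> S}"

definition "\<theta> = r / (real l - 1)"
definition "\<kappa> = (r * k + 1) / (real m - 1)"
definition "\<beta> = 1 / (8 * l * r * (r * k + 1))"
definition "\<delta> = \<beta> / (2 * r)"
definition "\<alpha> = 1 / (64 * r^3 * (r * k + 1))"

definition pot_x :: "ss_vertex set \<Rightarrow> real" where
  "pot_x S = \<alpha> - \<beta> * ((real k - real (min_pos_or k (occ S))) + \<kappa> * of_bool (0 \<in> occ S)) - \<delta> * of_bool (Centre \<in> S)"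
definition pot_gone :: "ss_vertex set \<Rightarrow> real" where
  "pot_gone S = 1 - \<theta> * (r * (real k - real (min_or k (occ S))) + of_bool (Centre \<in> S))"
definition pot :: "ss_vertex set \<Rightarrow> real" where
  "pot S = (if x \<in> S then pot_x S else pot_gone S)"
definition u :: "ss_vertex set \<Rightarrow> real" where
  "u S = (if confined S then max 0 (pot S) else 0)"

lemma two_le_l: "2 \<le> l"
proof -
  have "0 < 2 * r * (r * k + 1)" using r k by (simp add: add_pos_nonneg)
  hence "1 < real l" using l_large by simp
  thus ?thesis by simp
qed

lemma two_le_m: "2 \<le> m"
proof -
  have "1 < real m" using m_large r by simp
  thus ?thesis by simp
qed

lemma rk_pos: "r * k + 1 > 0"
proof -
  have "0 \<le> r * k" using r by simp
  thus ?thesis by simp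
qed

lemma params_pos: "0 < \<theta>" "0 < \<kappa>" "0 < \<beta>" "0 < \<delta>" "0 < \<alpha>"
  using r rk_pos two_le_l two_le_m unfolding \<theta>_def \<kappa>_def \<beta>_def \<delta>_def \<alpha>_def by auto

lemma \<theta>_l: "\<theta> * (real l - 1) = r" using two_le_l unfolding \<theta>_def by simp

lemma occ_subset: "confined S \<Longrightarrow> occ S \<subseteq> {..<k}"
  unfolding confined_def occ_def by (auto simp: superstar_V_iff)

lemma min_pos_or_occ_range: "confined S \<Longrightarrow> 0 \<le> real k - real (min_pos_or k (occ S)) \<and> real k - real (min_pos_or k (occ S)) \<le> real k - 1"
  using min_pos_or_le[OF occ_subset] min_pos_or_ge_1[OF occ_subset k] by auto

lemma min_or_occ_range: "confined S \<Longrightarrow> 0 \<le> real k - real (min_or k (occ S)) \<and> real k - real (min_or k (occ S)) \<le> real k"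
  using min_or_le[OF occ_subset] by auto

lemma pot_x_le: "confined S \<Longrightarrow> pot_x S \<le> \<alpha>"
proof -
  assume t: "confined S"
  have "0 \<le> \<beta> * ((real k - real (min_pos_or k (occ S))) + \<kappa> * of_bool (0 \<in> occ S))"
    using min_pos_or_occ_range[OF t] params_pos zero_less_eq_of_bool of_bool_less_eq_one by (intro mult_nonneg_nonneg add_nonneg_nonneg) auto
  moreover have "0 \<le> \<delta> * of_bool (Centre \<in> S)" using params_pos zero_less_eq_of_bool of_bool_less_eq_one by simp
  ultimately show ?thesis unfolding pot_x_def by linarith
qed

lemma pot_gone_le: "confined S \<Longrightarrow> pot_gone S \<le> 1"
proof -
  assume t: "confined S"
  have "0 \<le> \<theta> * (r * (real k - real (min_or k (occ S))) + of_bool (Centre \<in> S))"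
    using min_or_occ_range[OF t] params_pos zero_less_eq_of_bool of_bool_less_eq_one r by (intro mult_nonneg_nonneg add_nonneg_nonneg) auto
  thus ?thesis unfolding pot_gone_def by linarith
qed

lemma pot_gone_ge: "confined S \<Longrightarrow> 1/2 \<le> pot_gone S"
proof -
  assume t: "confined S"
  have "r * (real k - real (min_or k (occ S))) + of_bool (Centre \<in> S) \<le> r * k + 1"
    using min_or_occ_range[OF t] zero_less_eq_of_bool of_bool_less_eq_one r by (intro add_mono) auto
  hence "\<theta> * (r * (real k - real (min_or k (occ S))) + of_bool (Centre \<in> S)) \<le> \<theta> * (r * k + 1)"
    using params_pos by (intro mult_left_mono) auto
  also have "\<theta> * (r * k + 1) \<le> 1/2"
  proof -
    have "\<theta> * (r * k + 1) = r * (r * k + 1) / (real l - 1)" unfolding \<theta>_def by simp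
    also have "\<dots> \<le> 1/2" using l_large two_le_l by (simp add: divide_le_eq)
    finally show ?thesis .
  qed
  finally show ?thesis unfolding pot_gone_def by linarith
qed

lemma u_nonneg: "0 \<le> u S" unfolding u_def by auto

lemma u_ge_pot: "confined S \<Longrightarrow> pot S \<le> u S" unfolding u_def by auto

lemma u_eq_pot: "confined S \<Longrightarrow> 0 < pot S \<Longrightarrow> u S = pot S" unfolding u_def by auto

lemma \<alpha>_le_quarter: "\<alpha> \<le> 1/4"
proof -
  have "1 \<le> r^3" using r by (simp add: one_le_power)
  moreover have "1 \<le> r * k + 1" using r by simp
  ultimately have h: "1 * 1 \<le> r^3 * (r * k + 1)" using r by (intro mult_mono) auto
  have "\<alpha> = 1 / (64 * (r^3 * (r * k + 1)))" unfolding \<alpha>_def by (simp add: mult.assoc)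
  also have "\<dots> \<le> 1 / (64 * 1)" using h by (intro divide_left_mono mult_left_mono) auto
  finally show ?thesis by simp
qed

lemma confined_insert_Path: "confined S \<Longrightarrow> j < k \<Longrightarrow> confined (insert (Path i j) S)"
  unfolding confined_def using i by (auto simp: superstar_V_iff)
lemma confined_insert_Centre: "confined S \<Longrightarrow> confined (insert Centre S)"
  unfolding confined_def by (auto simp: superstar_V_iff)
lemma confined_remove: "confined S \<Longrightarrow> confined (S - {w})"
  unfolding confined_def by auto

lemma occ_simps:
  "occ (insert (Path i j) S) = insert j (occ S)"
  "occ (S - {Path i j}) = occ S - {j}"
  "occ (insert Centre S) = occ S" "occ (S - {Centre}) = occ S"
  "occ (insert (Res i' a) S) = occ S" "occ (S - {Res i' a}) = occ S"
  unfolding occ_def by auto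

lemma pot_x_insert_Path_Suc: "confined S \<Longrightarrow> j \<in> occ S \<Longrightarrow> j \<noteq> 0 \<Longrightarrow> Suc j < k \<Longrightarrow> pot_x (insert (Path i (Suc j)) S) = pot_x S"
  unfolding pot_x_def occ_simps using min_pos_or_insert_Suc[OF occ_subset] by simp

lemma pot_x_ge_minus_beta_k: "confined S \<Longrightarrow> confined S' \<Longrightarrow> (0 \<in> occ S') = (0 \<in> occ S) \<Longrightarrow> (Centre \<in> S') = (Centre \<in> S) \<Longrightarrow> pot_x S' \<ge> pot_x S - \<beta> * k"
proof -
  assume t: "confined S" "confined S'" and e: "(0 \<in> occ S') = (0 \<in> occ S)" "(Centre \<in> S') = (Centre \<in> S)"
  have "real k - real (min_pos_or k (occ S')) \<le> (real k - real (min_pos_or k (occ S))) + k"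
    using min_pos_or_occ_range[OF t(1)] min_pos_or_occ_range[OF t(2)] by linarith
  hence "\<beta> * (real k - real (min_pos_or k (occ S'))) \<le> \<beta> * ((real k - real (min_pos_or k (occ S))) + k)"
    using params_pos by (intro mult_left_mono) auto
  thus ?thesis unfolding pot_x_def e by (simp add: algebra_simps)
qed

lemma pot_x_remove_Path: "confined S \<Longrightarrow> j \<noteq> 0 \<Longrightarrow> pot_x (S - {Path i j}) \<ge> pot_x S"
proof -
  assume t: "confined S" and j: "j \<noteq> 0"
  have "min_pos_or k (occ S) \<le> min_pos_or k (occ S - {j})" by (rule min_pos_or_remove[OF occ_subset[OF t]])
  hence "\<beta> * (real k - real (min_pos_or k (occ S - {j}))) \<le> \<beta> * (real k - real (min_pos_or k (occ S)))"
    using params_pos by (intro mult_left_mono) auto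
  thus ?thesis unfolding pot_x_def occ_simps using j by (simp add: algebra_simps)
qed

lemma pot_x_remove_first_Path: "confined S \<Longrightarrow> occ S - {0} \<noteq> {} \<Longrightarrow> pot_x (S - {Path i (min_pos_or k (occ S))}) \<ge> pot_x S + \<beta>"
proof -
  assume t: "confined S" and ne: "occ S - {0} \<noteq> {}"
  have j: "min_pos_or k (occ S) \<noteq> 0" using min_pos_or_mem[OF occ_subset[OF t] ne] by simp
  have "Suc (min_pos_or k (occ S)) \<le> min_pos_or k (occ S - {min_pos_or k (occ S)})" by (rule min_pos_or_remove_min[OF occ_subset[OF t] ne])
  hence "\<beta> * (real k - real (min_pos_or k (occ S - {min_pos_or k (occ S)}))) \<le> \<beta> * (real k - real (min_pos_or k (occ S)) - 1)"
    using params_pos by (intro mult_left_mono) auto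
  thus ?thesis unfolding pot_x_def occ_simps using j by (simp add: algebra_simps)
qed

lemma pot_x_insert_Path_0: "0 \<notin> occ S \<Longrightarrow> pot_x (insert (Path i 0) S) = pot_x S - \<beta> * \<kappa>"
  unfolding pot_x_def occ_simps min_pos_or_zero by (simp add: of_bool_def algebra_simps)

lemma pot_x_remove_Path_0: "0 \<in> occ S \<Longrightarrow> pot_x (S - {Path i 0}) = pot_x S + \<beta> * \<kappa>"
  unfolding pot_x_def occ_simps min_pos_or_zero by (simp add: of_bool_def algebra_simps)

lemma pot_x_insert_Centre: "Centre \<notin> S \<Longrightarrow> pot_x (insert Centre S) = pot_x S - \<delta>"
  unfolding pot_x_def occ_simps by (simp add: of_bool_def algebra_simps)

lemma pot_x_remove_Centre: "Centre \<in> S \<Longrightarrow> pot_x (S - {Centre}) = pot_x S + \<delta>"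
  unfolding pot_x_def occ_simps by (simp add: of_bool_def algebra_simps)

lemma pot_gone_insert_Path_Suc: "confined S \<Longrightarrow> j \<in> occ S \<Longrightarrow> pot_gone (insert (Path i (Suc j)) S) = pot_gone S"
  unfolding pot_gone_def occ_simps using min_or_insert_Suc[OF occ_subset] by simp

lemma pot_gone_remove_Path: "confined S \<Longrightarrow> pot_gone (S - {Path i j}) \<ge> pot_gone S"
proof -
  assume t: "confined S"
  have "min_or k (occ S) \<le> min_or k (occ S - {j})" by (rule min_or_remove[OF occ_subset[OF t]])
  hence "\<theta> * (r * (real k - real (min_or k (occ S - {j})))) \<le> \<theta> * (r * (real k - real (min_or k (occ S))))"
    using params_pos r by (intro mult_left_mono) auto
  thus ?thesis unfolding pot_gone_def occ_simps by (simp add: algebra_simps)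
qed

lemma pot_gone_remove_first_Path: "confined S \<Longrightarrow> occ S \<noteq> {} \<Longrightarrow> pot_gone (S - {Path i (min_or k (occ S))}) \<ge> pot_gone S + \<theta> * r"
proof -
  assume t: "confined S" and ne: "occ S \<noteq> {}"
  have "Suc (min_or k (occ S)) \<le> min_or k (occ S - {min_or k (occ S)})" by (rule min_or_remove_min[OF occ_subset[OF t] ne])
  hence "\<theta> * (r * (real k - real (min_or k (occ S - {min_or k (occ S)})))) \<le> \<theta> * (r * (real k - real (min_or k (occ S)) - 1))"
    using params_pos r by (intro mult_left_mono) auto
  thus ?thesis unfolding pot_gone_def occ_simps by (simp add: algebra_simps)
qed

lemma pot_gone_insert_Centre: "Centre \<notin> S \<Longrightarrow> pot_gone (insert Centre S) = pot_gone S - \<theta>"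
  unfolding pot_gone_def occ_simps by (simp add: of_bool_def algebra_simps)

lemma pot_gone_remove_Centre: "Centre \<in> S \<Longrightarrow> pot_gone (S - {Centre}) = pot_gone S + \<theta>"
  unfolding pot_gone_def occ_simps by (simp add: of_bool_def algebra_simps)

lemma pot_x_le_u: "confined S \<Longrightarrow> x \<in> S \<Longrightarrow> pot_x S \<le> u S" using u_ge_pot unfolding pot_def by fastforce
lemma pot_gone_le_u: "confined S \<Longrightarrow> x \<notin> S \<Longrightarrow> pot_gone S \<le> u S" using u_ge_pot unfolding pot_def by fastforce

lemma r_beta_kappa_eq: "r * \<beta> * \<kappa> = 1 / (8 * l * (real m - 1))"
proof -
  have D: "real m - 1 > 0" using two_le_m by simp
  have g: "\<And>r X D L::real. r > 0 \<Longrightarrow> X > 0 \<Longrightarrow> D > 0 \<Longrightarrow> L > 0 \<Longrightarrow> r * (1 / (8 * L * r * X)) * (X / D) = 1 / (8 * L * D)"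
    by (simp add: field_simps)
  show ?thesis unfolding \<beta>_def \<kappa>_def using g[of r "r * k + 1" "real m - 1" "real l"] r rk_pos D two_le_l by simp
qed

lemma m_kappa_eq: "(real m - 1) * \<kappa> = r * k + 1"
proof -
  have "real m - 1 > 0" using two_le_m by simp
  thus ?thesis unfolding \<kappa>_def by simp
qed

lemma r_delta_eq: "r * \<delta> = \<beta> / 2" using r unfolding \<delta>_def by simp

lemma r_beta_kappa_le: "r * \<beta> * \<kappa> \<le> (1/2 - \<alpha>) / (l * m)"
proof -
  have m1: "real m - 1 > 0" using two_le_m by simp
  have "r * \<beta> * \<kappa> = 1 / (8 * l * (real m - 1))" by (rule r_beta_kappa_eq)
  also have "\<dots> \<le> (1/4) / (l * m)"
  proof -
    have "4 * (real l * real m) \<le> 8 * real l * (real m - 1)" using two_le_m two_le_l by (simp add: algebra_simps)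
    thus ?thesis using m1 two_le_l two_le_m by (simp add: divide_simps)
  qed
  also have "\<dots> \<le> (1/2 - \<alpha>) / (l * m)" using \<alpha>_le_quarter two_le_l two_le_m by (intro divide_right_mono) auto
  finally show ?thesis .
qed

lemma r_alpha_beta_kappa_le: "r * \<alpha> + r * \<beta> * \<kappa> \<le> (real l - 1) * \<delta>"
proof -
  have m1: "real m - 1 > 0" using two_le_m by simp
  have ed: "(real l - 1) * \<delta> = (real l - 1) / (16 * l * r^2 * (r * k + 1))"
    using r rk_pos two_le_l unfolding \<delta>_def \<beta>_def by (simp add: field_simps power2_eq_square)
  have g: "\<And>r X::real. r > 0 \<Longrightarrow> X > 0 \<Longrightarrow> r * (1 / (64 * r^3 * X)) = 1 / (64 * r^2 * X)"
    by (simp add: field_simps power2_eq_square power3_eq_cube)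
  have ea: "r * \<alpha> = 1 / (64 * r^2 * (r * k + 1))"
    unfolding \<alpha>_def using g[of r "r * k + 1"] r rk_pos by simp
  have A: "r * \<alpha> \<le> (real l - 1) / (32 * l * r^2 * (r * k + 1))"
  proof -
    have "32 * l * r^2 * (r * k + 1) \<le> (real l - 1) * (64 * r^2 * (r * k + 1))"
    proof -
      have "32 * real l \<le> (real l - 1) * 64" using two_le_l by simp
      hence "32 * real l * (r^2 * (r * k + 1)) \<le> (real l - 1) * 64 * (r^2 * (r * k + 1))"
        using rk_pos by (intro mult_right_mono) auto
      thus ?thesis by (simp add: algebra_simps)
    qed
    thus ?thesis unfolding ea using r rk_pos two_le_l by (simp add: divide_simps)
  qed
  have B: "r * \<beta> * \<kappa> \<le> (real l - 1) / (32 * l * r^2 * (r * k + 1))"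
  proof -
    have "4 * r^2 * (r * k + 1) \<le> (real m - 1) * (real l - 1)"
    proof -
      have "(4 * r) * (2 * r * (r * k + 1)) \<le> (real m - 1) * (real l - 1)"
        using m_large l_large r rk_pos by (intro mult_mono) auto
      moreover have "4 * r^2 * (r * k + 1) \<le> (4 * r) * (2 * r * (r * k + 1))"
        using r rk_pos by (simp add: power2_eq_square)
      ultimately show ?thesis by linarith
    qed
    hence "32 * l * r^2 * (r * k + 1) \<le> 8 * l * (real m - 1) * (real l - 1)"
    proof -
      assume h: "4 * r^2 * (r * k + 1) \<le> (real m - 1) * (real l - 1)"
      have "8 * real l * (4 * r^2 * (r * k + 1)) \<le> 8 * real l * ((real m - 1) * (real l - 1))"
        using h by (intro mult_left_mono) auto
      thus ?thesis by (simp add: algebra_simps)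
    qed
    hence h2: "32 * l * r^2 * (r * k + 1) \<le> (real l - 1) * (8 * l * (real m - 1))" by (simp add: mult_ac)
    have g: "\<And>a b c::real. a > 0 \<Longrightarrow> b > 0 \<Longrightarrow> b \<le> c * a \<Longrightarrow> 1 / a \<le> c / b"
      by (simp add: divide_simps)
    have "8 * real l * (real m - 1) > 0" using two_le_l m1 by simp
    moreover have "32 * real l * r^2 * (r * k + 1) > 0" using two_le_l r rk_pos by simp
    ultimately show ?thesis unfolding r_beta_kappa_eq using g h2 by (simp add: mult.assoc)
  qed
  have z: "real l * r^2 * (r * k + 1) > 0" using two_le_l r rk_pos by simp
  have gg: "\<And>y z::real. z > 0 \<Longrightarrow> y / (32 * z) + y / (32 * z) = y / (16 * z)" by (simp add: field_simps)
  have "(real l - 1) / (32 * l * r^2 * (r * k + 1)) + (real l - 1) / (32 * l * r^2 * (r * k + 1)) = (real l - 1) * \<delta>"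
    unfolding ed using gg[OF z, of "real l - 1"] by (simp add: mult.assoc)
  thus ?thesis using A B by linarith
qed

definition "other_reservoir = {Res i a | a. a < m \<and> a \<noteq> a0}"
definition "other_path_ends = {Path i' (k - 1) | i'. i' < l \<and> i' \<noteq> i}"

lemma other_reservoir_subset: "other_reservoir \<subseteq> VV" unfolding other_reservoir_def using i by (auto simp: superstar_V_iff)
lemma other_path_ends_subset: "other_path_ends \<subseteq> VV" unfolding other_path_ends_def using k by (auto simp: superstar_V_iff)

lemma card_other_reservoir: "card other_reservoir = m - 1"
proof -
  have "other_reservoir = (\<lambda>a. Res i a) ` ({..<m} - {a0})" unfolding other_reservoir_def by auto
  hence "card other_reservoir = card ({..<m} - {a0})" by (simp add: card_image inj_on_def)
  thus ?thesis using a0 by simp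
qed

lemma card_other_path_ends: "card other_path_ends = l - 1"
proof -
  have "other_path_ends = (\<lambda>i'. Path i' (k - 1)) ` ({..<l} - {i})" unfolding other_path_ends_def by auto
  hence "card other_path_ends = card ({..<l} - {i})" by (simp add: card_image inj_on_def)
  thus ?thesis using i by simp
qed

definition drift_lb_x :: "ss_vertex set \<Rightarrow> ss_vertex \<Rightarrow> real" where
  "drift_lb_x S v =
     (if v = Centre then (if Centre \<in> S then - r * \<alpha> else (1/2 - \<alpha>) / (l * m)) else 0)
   + (if v = x then (if 0 \<in> occ S then 0 else - r * \<beta> * \<kappa>) else 0)
   + (if v \<in> other_reservoir then (if 0 \<in> occ S then \<beta> * \<kappa> else 0) else 0)
   + (if v \<in> other_path_ends then (if Centre \<in> S then \<delta> else 0) else 0)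
   + (if v = Path i 0 then (if 0 \<in> occ S \<and> Suc 0 < k then - r * \<beta> * k else 0) else 0)
   + (if v = Path i (k - 1) then (if k - 1 \<in> occ S \<and> Centre \<notin> S then - r * \<delta> else 0) else 0)
   + (if v = Path i (min_pos_or k (occ S) - 1) then (if 0 \<notin> occ S \<and> occ S - {0} \<noteq> {} then \<beta> else 0) else 0)"

lemma drift_lb_x_sum: assumes t: "confined S"
  shows "(\<Sum>v\<in>VV. drift_lb_x S v) =
     (if Centre \<in> S then - r * \<alpha> else (1/2 - \<alpha>) / (l * m))
   + (if 0 \<in> occ S then 0 else - r * \<beta> * \<kappa>)
   + (if 0 \<in> occ S then \<beta> * \<kappa> else 0) * (m - 1)
   + (if Centre \<in> S then \<delta> else 0) * (l - 1)
   + (if 0 \<in> occ S \<and> Suc 0 < k then - r * \<beta> * k else 0)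
   + (if k - 1 \<in> occ S \<and> Centre \<notin> S then - r * \<delta> else 0)
   + (if 0 \<notin> occ S \<and> occ S - {0} \<noteq> {} then \<beta> else 0)"
proof -
  have CV: "Centre \<in> VV" by (simp add: superstar_V_iff)
  have xV: "x \<in> VV" using i a0 by (simp add: superstar_V_iff)
  have P0V: "Path i 0 \<in> VV" using i k by (simp add: superstar_V_iff)
  have PkV: "Path i (k - 1) \<in> VV" using i k by (simp add: superstar_V_iff)
  have "min_pos_or k (occ S) - 1 < k" using min_pos_or_le[OF occ_subset[OF t]] min_pos_or_ge_1[OF occ_subset[OF t] k] by simp
  hence PlV: "Path i (min_pos_or k (occ S) - 1) \<in> VV" using i by (simp add: superstar_V_iff)
  show ?thesis unfolding drift_lb_x_def sum.distrib
    using sum_superstar_V_delta[OF CV] sum_superstar_V_delta[OF xV] sum_superstar_V_delta[OF P0V] sum_superstar_V_delta[OF PkV] sum_superstar_V_delta[OF PlV]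
      sum_superstar_V_indicator[OF other_reservoir_subset] sum_superstar_V_indicator[OF other_path_ends_subset] card_other_reservoir card_other_path_ends two_le_m two_le_l
    by (simp add: of_nat_diff mult.commute)
qed

lemma drift_lb_x_nonneg: assumes t: "confined S" shows "0 \<le> (\<Sum>v\<in>VV. drift_lb_x S v)"
proof -
  have pos: "0 < \<beta>" "0 < \<delta>" "0 < \<kappa>" "0 < \<alpha>" "0 \<le> r * \<beta> * k" "0 \<le> r * \<beta> * \<kappa>"
    using params_pos r by simp_all
  have "\<beta> * ((real m - 1) * \<kappa>) = \<beta> * (r * k + 1)" by (simp only: m_kappa_eq)
  then have e: "\<beta> * \<kappa> * (real m - 1) = r * \<beta> * k + \<beta>" by (simp add: algebra_simps)
  have diff: "real (m - 1) = real m - 1" "real (l - 1) = real l - 1" using two_le_m two_le_l by (auto simp: of_nat_diff)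
  have escape: "k - 1 \<in> occ S \<Longrightarrow> 0 \<notin> occ S \<Longrightarrow> occ S - {0} \<noteq> {}" by (cases "k - 1 = 0") auto
  show ?thesis
    unfolding drift_lb_x_sum[OF t] diff
    using r_beta_kappa_le r_alpha_beta_kappa_le r_delta_eq e pos escape mult.commute[of "real l - 1" \<delta>]
    by (cases "Centre \<in> S"; cases "0 \<in> occ S"; cases "k - 1 \<in> occ S"; cases "Suc 0 < k") auto
qed

lemma drift_lb_x_Centre: "drift_lb_x S Centre = (if Centre \<in> S then - r * \<alpha> else (1/2 - \<alpha>) / (l * m))"
  unfolding drift_lb_x_def other_reservoir_def other_path_ends_def by simp
lemma drift_lb_x_x: "drift_lb_x S x = (if 0 \<in> occ S then 0 else - r * \<beta> * \<kappa>)"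
  unfolding drift_lb_x_def other_reservoir_def other_path_ends_def by simp
lemma drift_lb_x_Res: "a \<noteq> a0 \<Longrightarrow> a < m \<Longrightarrow> drift_lb_x S (Res i a) = (if 0 \<in> occ S then \<beta> * \<kappa> else 0)"
  unfolding drift_lb_x_def other_reservoir_def other_path_ends_def by simp
lemma drift_lb_x_Res_other: "i' \<noteq> i \<Longrightarrow> drift_lb_x S (Res i' a) = 0"
  unfolding drift_lb_x_def other_reservoir_def other_path_ends_def by simp
lemma drift_lb_x_Path_other: "i' \<noteq> i \<Longrightarrow> i' < l \<Longrightarrow> drift_lb_x S (Path i' j) = (if j = k - 1 then (if Centre \<in> S then \<delta> else 0) else 0)"
  unfolding drift_lb_x_def other_reservoir_def other_path_ends_def by auto
lemma drift_lb_x_Path: "drift_lb_x S (Path i j) =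
     (if j = 0 then (if 0 \<in> occ S \<and> Suc 0 < k then - r * \<beta> * k else 0) else 0)
   + (if j = k - 1 then (if k - 1 \<in> occ S \<and> Centre \<notin> S then - r * \<delta> else 0) else 0)
   + (if j = min_pos_or k (occ S) - 1 then (if 0 \<notin> occ S \<and> occ S - {0} \<noteq> {} then \<beta> else 0) else 0)"
  unfolding drift_lb_x_def other_reservoir_def other_path_ends_def by auto

lemma confined_Res: "confined S \<Longrightarrow> Res i' a \<in> S \<Longrightarrow> Res i' a = x" unfolding confined_def by auto
lemma confined_Path: "confined S \<Longrightarrow> Path i' j \<in> S \<Longrightarrow> i' = i" unfolding confined_def by auto

lemma drift_lb_x_first_pos_term_zero:
  assumes t: "confined S" and j: "j \<in> occ S"
  shows "(if j = min_pos_or k (occ S) - 1 then (if 0 \<notin> occ S \<and> occ S - {0} \<noteq> {} then \<beta> else 0) else 0) = 0"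
proof (cases "j = min_pos_or k (occ S) - 1 \<and> 0 \<notin> occ S \<and> occ S - {0} \<noteq> {}")
  case True
  hence "j \<noteq> 0" using j by auto
  hence "min_pos_or k (occ S) \<le> j" using min_pos_or_le_mem[OF occ_subset[OF t] j] by simp
  moreover have "1 \<le> min_pos_or k (occ S)" using min_pos_or_ge_1[OF occ_subset[OF t] k] .
  ultimately show ?thesis using True by simp
next
  case False thus ?thesis by auto
qed

lemma pot_x_remove_le_u: "confined S \<Longrightarrow> x \<in> S \<Longrightarrow> w \<noteq> x \<Longrightarrow> pot_x (S - {w}) \<le> u (S - {w})"
  using pot_x_le_u[OF confined_remove, of S w] by simp

lemma drift_term_ge_lb_x_Centre:
  assumes t: "confined S" and xS: "x \<in> S" and pos: "0 < pot_x S" and v: "v \<in> VV"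
    and Centre: "v = Centre"
  shows "drift_term (superstar_E k l m) r u S v \<ge> drift_lb_x S v"
proof -
  have uS: "u S = pot_x S" using u_eq_pot[OF t] pos xS unfolding pot_def by simp
  have LXa: "pot_x S \<le> \<alpha>" by (rule pot_x_le[OF t])
  show ?thesis
  proof (cases "Centre \<in> S")
    case True
    have "(\<Sum>w\<in>reservoirs l m. u (reproduce S Centre w) - u S) \<ge> (\<Sum>w\<in>reservoirs l m. - pot_x S)"
      using uS u_nonneg by (intro sum_mono) simp
    also have "(\<Sum>w\<in>reservoirs l m. - pot_x S) = - (l * m) * pot_x S" by (simp add: card_reservoirs)
    finally have h: "(\<Sum>w\<in>reservoirs l m. u (reproduce S Centre w) - u S) \<ge> - (l * m) * pot_x S" .
    have lm: "real l * real m > 0" using two_le_l two_le_m by simp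
    have "drift_term (superstar_E k l m) r u S v = r / (l * m) * (\<Sum>w\<in>reservoirs l m. u (reproduce S Centre w) - u S)"
      using Centre True by (simp add: drift_term_Centre fitness_def)
    also have "\<dots> \<ge> r / (l * m) * (- (l * m) * pot_x S)" using h r lm by (intro mult_left_mono) auto
    also have "r / (l * m) * (- (l * m) * pot_x S) = - r * pot_x S"
    proof -
      have g: "\<And>c d::real. d \<noteq> 0 \<Longrightarrow> r / d * (- d * c) = - r * c" by (simp add: field_simps)
      have "real (l * m) \<noteq> 0" using two_le_l two_le_m by simp
      from g[OF this, of "pot_x S"] show ?thesis by simp
    qed
    finally have "drift_term (superstar_E k l m) r u S v \<ge> - r * pot_x S" .
    moreover have "- r * pot_x S \<ge> - r * \<alpha>" using LXa r by simp
    ultimately show ?thesis using Centre True by (simp add: drift_lb_x_Centre)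
  next
    case False
    have eq: "\<And>w. w \<in> reservoirs l m \<Longrightarrow> u (reproduce S Centre w) - u S = (if w = x then u (S - {x}) - pot_x S else 0)"
    proof -
      fix w assume w: "w \<in> reservoirs l m"
      show "u (reproduce S Centre w) - u S = (if w = x then u (S - {x}) - pot_x S else 0)"
      proof (cases "w = x")
        case True thus ?thesis using False uS by (simp add: reproduce_def)
      next
        case nx: False
        from w obtain i' a where "w = Res i' a" unfolding reservoirs_def by auto
        hence "w \<notin> S" using confined_Res[OF t] nx by blast
        thus ?thesis using False nx uS by (simp add: reproduce_def)
      qed
    qed
    have xr: "x \<in> reservoirs l m" using i a0 unfolding reservoirs_def by auto
    have "(\<Sum>w\<in>reservoirs l m. u (reproduce S Centre w) - u S) = u (S - {x}) - pot_x S"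
      using eq finite_reservoirs xr by (simp add: sum.delta' cong: sum.cong)
    moreover have "u (S - {x}) \<ge> 1/2"
      using pot_gone_le_u[OF confined_remove[OF t], of x] pot_gone_ge[OF confined_remove[OF t], of x] by simp
    ultimately have h: "(\<Sum>w\<in>reservoirs l m. u (reproduce S Centre w) - u S) \<ge> 1/2 - \<alpha>" using LXa by simp
    have lm: "real l * real m > 0" using two_le_l two_le_m by simp
    have "drift_term (superstar_E k l m) r u S v = 1 / (l * m) * (\<Sum>w\<in>reservoirs l m. u (reproduce S Centre w) - u S)"
      using Centre False by (simp add: drift_term_Centre fitness_def)
    also have "\<dots> \<ge> 1 / (l * m) * (1/2 - \<alpha>)" using h lm by (intro mult_left_mono) auto
    finally show ?thesis using Centre False by (simp add: drift_lb_x_Centre)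
  qed
qed

lemma drift_term_ge_lb_x_Res:
  assumes t: "confined S" and xS: "x \<in> S" and pos: "0 < pot_x S" and v: "v \<in> VV"
    and Res: "v = Res i' a"
  shows "drift_term (superstar_E k l m) r u S v \<ge> drift_lb_x S v"
proof -
  have uS: "u S = pot_x S" using u_eq_pot[OF t] pos xS unfolding pot_def by simp
  have ia: "i' < l" "a < m" using v Res by (auto simp: superstar_V_iff)
  have cR: "drift_term (superstar_E k l m) r u S v = fitness r S v * (u (reproduce S v (Path i' 0)) - u S)"
    using Res drift_term_Res[OF ia k] by simp
  show ?thesis
  proof (cases "i' = i")
    case True
    show ?thesis
    proof (cases "a = a0")
      case True
      hence vx: "v = x" using Res \<open>i' = i\<close> by simp
      show ?thesis
      proof (cases "0 \<in> occ S")
        case True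
        have "reproduce S v (Path i' 0) = S" using vx xS True \<open>i' = i\<close> unfolding reproduce_def occ_def by auto
        thus ?thesis using cR vx True by (simp add: drift_lb_x_x)
      next
        case False
        have "u (reproduce S v (Path i' 0)) \<ge> pot_x S - \<beta> * \<kappa>"
        proof -
          have "reproduce S v (Path i' 0) = insert (Path i 0) S" using vx xS \<open>i' = i\<close> unfolding reproduce_def by simp
          moreover have "pot_x (insert (Path i 0) S) = pot_x S - \<beta> * \<kappa>" by (rule pot_x_insert_Path_0[OF False])
          moreover have "pot_x (insert (Path i 0) S) \<le> u (insert (Path i 0) S)"
            using pot_x_le_u[OF confined_insert_Path[OF t k]] xS by simp
          ultimately show ?thesis by simp
        qed
        hence "r * (- \<beta> * \<kappa>) \<le> r * (u (reproduce S v (Path i' 0)) - u S)" using uS by (intro mult_left_mono) (use r_pos in simp_all)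
        hence "drift_term (superstar_E k l m) r u S v \<ge> r * (- \<beta> * \<kappa>)" using cR vx xS unfolding fitness_def by simp
        thus ?thesis using vx False by (simp add: drift_lb_x_x)
      qed
    next
      case False
      have vS: "v \<notin> S" using confined_Res[OF t] Res False by auto
      show ?thesis
      proof (cases "0 \<in> occ S")
        case True
        have "u (reproduce S v (Path i' 0)) \<ge> pot_x S + \<beta> * \<kappa>"
        proof -
          have "reproduce S v (Path i' 0) = S - {Path i 0}" using vS \<open>i' = i\<close> unfolding reproduce_def by simp
          moreover have "pot_x (S - {Path i 0}) = pot_x S + \<beta> * \<kappa>" by (rule pot_x_remove_Path_0[OF True])
          moreover have "pot_x (S - {Path i 0}) \<le> u (S - {Path i 0})"
            using pot_x_remove_le_u[OF t xS, of "Path i 0"] by simp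
          ultimately show ?thesis by simp
        qed
        hence "drift_term (superstar_E k l m) r u S v \<ge> \<beta> * \<kappa>" using cR vS uS unfolding fitness_def by simp
        thus ?thesis using Res \<open>i' = i\<close> False True ia by (simp add: drift_lb_x_Res)
      next
        case nz: False
        have "reproduce S v (Path i' 0) = S" using vS \<open>i' = i\<close> nz unfolding reproduce_def occ_def by auto
        thus ?thesis using cR Res \<open>i' = i\<close> False nz ia by (simp add: drift_lb_x_Res)
      qed
    qed
  next
    case False
    have vS: "v \<notin> S" using confined_Res[OF t] Res False by auto
    have "Path i' 0 \<notin> S" using confined_Path[OF t] False by auto
    hence "reproduce S v (Path i' 0) = S" using vS unfolding reproduce_def by auto
    thus ?thesis using cR Res False by (simp add: drift_lb_x_Res_other)
  qed
qed

lemma drift_term_ge_lb_x_Path_other: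
  assumes t: "confined S" and xS: "x \<in> S" and pos: "0 < pot_x S" and v: "v \<in> VV"
    and Path: "v = Path i' j" and other: "i' \<noteq> i"
  shows "drift_term (superstar_E k l m) r u S v \<ge> drift_lb_x S v"
proof -
  have uS: "u S = pot_x S" using u_eq_pot[OF t] pos xS unfolding pot_def by simp
  have ij: "i' < l" "j < k" using v Path by (auto simp: superstar_V_iff)
  have vS: "v \<notin> S" using confined_Path[OF t] Path other by auto
  show ?thesis
  proof (cases "Suc j < k")
    case True
    have "Path i' (Suc j) \<notin> S" using confined_Path[OF t] other by auto
    hence "reproduce S v (Path i' (Suc j)) = S" using vS unfolding reproduce_def by auto
    moreover have "j \<noteq> k - 1" using True by simp
    ultimately show ?thesis using drift_term_Path[OF ij(1) True] Path other True ij by (simp add: drift_lb_x_Path_other)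
  next
    case nk: False
    hence jk: "Suc j = k" using ij by simp
    have cP: "drift_term (superstar_E k l m) r u S v = fitness r S v * (u (reproduce S v Centre) - u S)"
      using drift_term_Path_last[OF ij(1) jk] Path by simp
    show ?thesis
    proof (cases "Centre \<in> S")
      case True
      have "u (S - {Centre}) \<ge> pot_x S + \<delta>"
        using pot_x_remove_le_u[OF t xS, of Centre] pot_x_remove_Centre[OF True] by simp
      hence "drift_term (superstar_E k l m) r u S v \<ge> \<delta>" using cP vS uS unfolding fitness_def reproduce_def by simp
      moreover have "drift_lb_x S v = \<delta>" using Path other ij jk True by (simp add: drift_lb_x_Path_other)
      ultimately show ?thesis by simp
    next
      case nC: False
      hence "reproduce S v Centre = S" using vS unfolding reproduce_def by auto
      moreover have "drift_lb_x S v = 0" using Path other ij jk nC by (simp add: drift_lb_x_Path_other)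
      ultimately show ?thesis using cP by simp
    qed
  qed
qed

lemma drift_term_ge_lb_x_Path_own_mutant:
  assumes t: "confined S" and xS: "x \<in> S" and pos: "0 < pot_x S" and v: "v \<in> VV"
    and vP: "v = Path i j"
    and jB: "j \<in> occ S"
  shows "drift_term (superstar_E k l m) r u S v \<ge> drift_lb_x S v"
proof -
  have uS: "u S = pot_x S" using u_eq_pot[OF t] pos xS unfolding pot_def by simp
  have pr: "0 < \<beta>" "0 < \<delta>" "0 < \<kappa>" "0 < \<alpha>" using params_pos by auto
  have ij: "i < l" "j < k" using v vP by (auto simp: superstar_V_iff)
  let ?t5 = "(if j = 0 then (if 0 \<in> occ S \<and> Suc 0 < k then - r * \<beta> * k else 0) else 0)"
  let ?t6 = "(if j = k - 1 then (if k - 1 \<in> occ S \<and> Centre \<notin> S then - r * \<delta> else 0) else 0)"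
  let ?t7 = "(if j = min_pos_or k (occ S) - 1 then (if 0 \<notin> occ S \<and> occ S - {0} \<noteq> {} then \<beta> else 0) else 0)"
  have lbv: "drift_lb_x S v = ?t5 + ?t6 + ?t7" using vP by (simp add: drift_lb_x_Path)
  have t5n: "?t5 \<le> 0" "?t5 \<ge> - r * \<beta> * k" using pr r by auto
  have vS: "v \<in> S" using jB vP unfolding occ_def by simp
  have t7: "?t7 = 0" by (rule drift_lb_x_first_pos_term_zero[OF t jB])
  show ?thesis
  proof (cases "Suc j < k")
    case jk: True
    have t6: "?t6 = 0" using jk by auto
    have cP: "drift_term (superstar_E k l m) r u S v = r * (u (insert (Path i (Suc j)) S) - pot_x S)"
      using drift_term_Path[OF i jk] vP vS uS by (simp add: fitness_def reproduce_def)
    show ?thesis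
    proof (cases "j = 0")
      case True
      have "pot_x (insert (Path i (Suc j)) S) \<ge> pot_x S - \<beta> * k"
        by (rule pot_x_ge_minus_beta_k[OF t confined_insert_Path[OF t jk]]) (auto simp: occ_simps True)
      moreover have "pot_x (insert (Path i (Suc j)) S) \<le> u (insert (Path i (Suc j)) S)"
        using pot_x_le_u[OF confined_insert_Path[OF t jk]] xS by simp
      ultimately have "r * (- \<beta> * k) \<le> r * (u (insert (Path i (Suc j)) S) - pot_x S)" by (intro mult_left_mono) (use r_pos in simp_all)
      hence c: "drift_term (superstar_E k l m) r u S v \<ge> r * (- \<beta> * k)" using cP by simp
      have "?t5 = - r * \<beta> * k" using True jB jk by simp
      hence "drift_lb_x S v = r * (- \<beta> * k)" using lbv t6 t7 by simp
      thus ?thesis using c by simp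
    next
      case False
      have "pot_x (insert (Path i (Suc j)) S) = pot_x S" by (rule pot_x_insert_Path_Suc[OF t jB False jk])
      moreover have "pot_x (insert (Path i (Suc j)) S) \<le> u (insert (Path i (Suc j)) S)"
        using pot_x_le_u[OF confined_insert_Path[OF t jk]] xS by simp
      ultimately have "drift_term (superstar_E k l m) r u S v \<ge> 0" using cP r by simp
      thus ?thesis using lbv t6 t7 t5n by simp
    qed
  next
    case False
    hence jk: "Suc j = k" using ij by simp
    have t5: "?t5 = 0" using jk by auto
    have cP: "drift_term (superstar_E k l m) r u S v = r * (u (insert Centre S) - pot_x S)"
      using drift_term_Path_last[OF i jk] vP vS uS by (simp add: fitness_def reproduce_def)
    show ?thesis
    proof (cases "Centre \<in> S")
      case True
      hence "insert Centre S = S" by auto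
      thus ?thesis using cP uS lbv t5 t7 True by simp
    next
      case nC: False
      have "u (insert Centre S) \<ge> pot_x S - \<delta>"
        using pot_x_le_u[OF confined_insert_Centre[OF t]] xS pot_x_insert_Centre[OF nC] by simp
      hence "r * (- \<delta>) \<le> r * (u (insert Centre S) - pot_x S)" by (intro mult_left_mono) (use r_pos in simp_all)
      hence "drift_term (superstar_E k l m) r u S v \<ge> r * (- \<delta>)" using cP by simp
      moreover have "?t6 = - r * \<delta>" using jk jB nC by auto
      ultimately show ?thesis using lbv t5 t7 by simp
    qed
  qed
qed

lemma drift_term_ge_lb_x_Path_own_nonmutant:
  assumes t: "confined S" and xS: "x \<in> S" and pos: "0 < pot_x S" and v: "v \<in> VV"
    and vP: "v = Path i j"
    and jB: "j \<notin> occ S"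
  shows "drift_term (superstar_E k l m) r u S v \<ge> drift_lb_x S v"
proof -
  have uS: "u S = pot_x S" using u_eq_pot[OF t] pos xS unfolding pot_def by simp
  have pr: "0 < \<beta>" "0 < \<delta>" "0 < \<kappa>" "0 < \<alpha>" using params_pos by auto
  have Bk: "occ S \<subseteq> {..<k}" by (rule occ_subset[OF t])
  have ij: "i < l" "j < k" using v vP by (auto simp: superstar_V_iff)
  let ?t5 = "(if j = 0 then (if 0 \<in> occ S \<and> Suc 0 < k then - r * \<beta> * k else 0) else 0)"
  let ?t6 = "(if j = k - 1 then (if k - 1 \<in> occ S \<and> Centre \<notin> S then - r * \<delta> else 0) else 0)"
  let ?t7 = "(if j = min_pos_or k (occ S) - 1 then (if 0 \<notin> occ S \<and> occ S - {0} \<noteq> {} then \<beta> else 0) else 0)"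
  have lbv: "drift_lb_x S v = ?t5 + ?t6 + ?t7" using vP by (simp add: drift_lb_x_Path)
  have vS: "v \<notin> S" using jB vP unfolding occ_def by simp
  have t5: "?t5 = 0" using jB by auto
  have t6: "?t6 = 0" using jB by auto
  show ?thesis
  proof (cases "Suc j < k")
    case jk: True
    have cP: "drift_term (superstar_E k l m) r u S v = u (S - {Path i (Suc j)}) - pot_x S"
      using drift_term_Path[OF i jk] vP vS uS by (simp add: fitness_def reproduce_def)
    have base: "u (S - {Path i (Suc j)}) \<ge> pot_x S"
      using pot_x_remove_le_u[OF t xS, of "Path i (Suc j)"] pot_x_remove_Path[OF t, of "Suc j"] by simp
    show ?thesis
    proof (cases "j = min_pos_or k (occ S) - 1 \<and> 0 \<notin> occ S \<and> occ S - {0} \<noteq> {}")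
      case True
      have e: "Suc j = min_pos_or k (occ S)" using True min_pos_or_ge_1[OF Bk k] by simp
      have ne: "occ S - {0} \<noteq> {}" using True by blast
      have a: "pot_x S + \<beta> \<le> pot_x (S - {Path i (min_pos_or k (occ S))})" by (rule pot_x_remove_first_Path[OF t ne])
      have b: "pot_x (S - {Path i (Suc j)}) \<le> u (S - {Path i (Suc j)})" by (rule pot_x_remove_le_u[OF t xS]) simp
      have "u (S - {Path i (Suc j)}) \<ge> pot_x S + \<beta>" using a b unfolding e by simp
      hence c: "drift_term (superstar_E k l m) r u S v \<ge> \<beta>" using cP by simp
      have "?t7 = \<beta>" using True by (simp only: if_True simp_thms)
      hence "drift_lb_x S v = \<beta>" using lbv t5 t6 by simp
      thus ?thesis using c by simp
    next
      case False
      hence "?t7 = 0" by auto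
      thus ?thesis using cP base lbv t5 t6 by simp
    qed
  next
    case False
    hence jk: "Suc j = k" using ij by simp
    have t7: "?t7 = 0"
    proof (cases "occ S - {0} \<noteq> {}")
      case True
      have "min_pos_or k (occ S) < k" using min_pos_or_mem[OF Bk True] by simp
      moreover have "1 \<le> min_pos_or k (occ S)" by (rule min_pos_or_ge_1[OF Bk k])
      ultimately have "j \<noteq> min_pos_or k (occ S) - 1" using jk by linarith
      thus ?thesis by simp
    next
      case False thus ?thesis by auto
    qed
    have cP: "drift_term (superstar_E k l m) r u S v = u (S - {Centre}) - pot_x S"
      using drift_term_Path_last[OF i jk] vP vS uS by (simp add: fitness_def reproduce_def)
    have "u (S - {Centre}) \<ge> pot_x S"
    proof (cases "Centre \<in> S")
      case True thus ?thesis using pot_x_remove_le_u[OF t xS, of Centre] pot_x_remove_Centre[OF True] pr by simp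
    next
      case False hence "S - {Centre} = S" by auto
      thus ?thesis using uS by simp
    qed
    thus ?thesis using cP lbv t5 t6 t7 by simp
  qed
qed

lemma drift_term_ge_lb_x_Path_own:
  assumes "confined S" "x \<in> S" "0 < pot_x S" "v \<in> VV" "v = Path i j"
  shows "drift_term (superstar_E k l m) r u S v \<ge> drift_lb_x S v"
  using assms drift_term_ge_lb_x_Path_own_mutant drift_term_ge_lb_x_Path_own_nonmutant by blast

lemma drift_term_ge_lb_x:
  assumes "confined S" "x \<in> S" "0 < pot_x S" "v \<in> VV"
  shows "drift_term (superstar_E k l m) r u S v \<ge> drift_lb_x S v"
proof (cases v)
  case (Path i' j)
  then show ?thesis
    using assms by (cases "i' = i") (auto intro: drift_term_ge_lb_x_Path_own drift_term_ge_lb_x_Path_other)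
qed (use assms in \<open>auto intro: drift_term_ge_lb_x_Centre drift_term_ge_lb_x_Res\<close>)

definition drift_lb_gone :: "ss_vertex set \<Rightarrow> ss_vertex \<Rightarrow> real" where
  "drift_lb_gone S v =
     (if v = Centre then (if Centre \<in> S then - r else 0) else 0)
   + (if v = x then (if 0 \<in> occ S then \<theta> * r else 0) else 0)
   + (if v \<in> other_path_ends then (if Centre \<in> S then \<theta> else 0) else 0)
   + (if v = Path i (k - 1) then (if k - 1 \<in> occ S \<and> Centre \<notin> S then - r * \<theta> else 0) else 0)
   + (if v = Path i (min_or k (occ S) - 1) then (if occ S \<noteq> {} \<and> 0 \<notin> occ S then \<theta> * r else 0) else 0)"

lemma drift_lb_gone_nonneg: assumes t: "confined S" shows "0 \<le> (\<Sum>v\<in>VV. drift_lb_gone S v)"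
proof -
  have CV: "Centre \<in> VV" by (simp add: superstar_V_iff)
  have xV: "x \<in> VV" using i a0 by (simp add: superstar_V_iff)
  have PkV: "Path i (k - 1) \<in> VV" using i k by (simp add: superstar_V_iff)
  have "min_or k (occ S) - 1 < k" using min_or_le[OF occ_subset[OF t]] k by simp
  hence PlV: "Path i (min_or k (occ S) - 1) \<in> VV" using i by (simp add: superstar_V_iff)
  have sum: "(\<Sum>v\<in>VV. drift_lb_gone S v) =
     (if Centre \<in> S then - r else 0) + (if 0 \<in> occ S then \<theta> * r else 0)
   + (if Centre \<in> S then \<theta> else 0) * (l - 1)
   + (if k - 1 \<in> occ S \<and> Centre \<notin> S then - r * \<theta> else 0)
   + (if occ S \<noteq> {} \<and> 0 \<notin> occ S then \<theta> * r else 0)"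
    unfolding drift_lb_gone_def sum.distrib
    using sum_superstar_V_delta[OF CV] sum_superstar_V_delta[OF xV] sum_superstar_V_delta[OF PkV] sum_superstar_V_delta[OF PlV]
      sum_superstar_V_indicator[OF other_path_ends_subset] card_other_path_ends two_le_l
    by (simp add: of_nat_diff mult.commute)
  have pos: "0 < \<theta>" using params_pos by simp
  have A: "(if Centre \<in> S then - r else 0) + (if Centre \<in> S then \<theta> else 0) * (l - 1) = 0"
    using \<theta>_l two_le_l by (simp add: of_nat_diff mult.commute)
  have B: "(if 0 \<in> occ S then \<theta> * r else 0) + (if k - 1 \<in> occ S \<and> Centre \<notin> S then - r * \<theta> else 0)
     + (if occ S \<noteq> {} \<and> 0 \<notin> occ S then \<theta> * r else 0) \<ge> 0"
    using pos r by (auto simp: mult.commute)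
  show ?thesis unfolding sum using A B by linarith
qed

lemma pot_gone_remove_le_u: "confined S \<Longrightarrow> x \<notin> S \<Longrightarrow> pot_gone (S - {w}) \<le> u (S - {w})"
  using pot_gone_le_u[OF confined_remove, of S w] by simp

lemma drift_lb_gone_Path: "drift_lb_gone S (Path i j) =
     (if j = k - 1 then (if k - 1 \<in> occ S \<and> Centre \<notin> S then - r * \<theta> else 0) else 0)
   + (if j = min_or k (occ S) - 1 then (if occ S \<noteq> {} \<and> 0 \<notin> occ S then \<theta> * r else 0) else 0)"
  unfolding drift_lb_gone_def other_path_ends_def by auto
lemma drift_lb_gone_Path_other: "i' \<noteq> i \<Longrightarrow> i' < l \<Longrightarrow> drift_lb_gone S (Path i' j) = (if j = k - 1 then (if Centre \<in> S then \<theta> else 0) else 0)"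
  unfolding drift_lb_gone_def other_path_ends_def by auto
lemma drift_lb_gone_Res: "(i', a) \<noteq> (i, a0) \<Longrightarrow> drift_lb_gone S (Res i' a) = 0"
  unfolding drift_lb_gone_def other_path_ends_def by auto
lemma drift_lb_gone_x: "drift_lb_gone S x = (if 0 \<in> occ S then \<theta> * r else 0)"
  unfolding drift_lb_gone_def other_path_ends_def by auto
lemma drift_lb_gone_Centre: "drift_lb_gone S Centre = (if Centre \<in> S then - r else 0)"
  unfolding drift_lb_gone_def other_path_ends_def by auto

lemma drift_term_ge_lb_gone_Centre:
  assumes t: "confined S" and xS: "x \<notin> S" and pos: "0 < pot_gone S" and v: "v \<in> VV"
    and Centre: "v = Centre"
  shows "drift_term (superstar_E k l m) r u S v \<ge> drift_lb_gone S v"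
proof -
  have uS: "u S = pot_gone S" using u_eq_pot[OF t] pos xS unfolding pot_def by simp
  have LB1: "pot_gone S \<le> 1" by (rule pot_gone_le[OF t])
  have noRes: "\<And>i' a. Res i' a \<notin> S" using confined_Res[OF t] xS by blast
  show ?thesis
  proof (cases "Centre \<in> S")
    case True
    have "(\<Sum>w\<in>reservoirs l m. u (reproduce S Centre w) - u S) \<ge> (\<Sum>w\<in>reservoirs l m. - 1)"
      using uS u_nonneg LB1 by (intro sum_mono) (smt (verit))
    also have "(\<Sum>w\<in>reservoirs l m. - 1) = - real (l * m)" by (simp add: card_reservoirs)
    finally have h: "(\<Sum>w\<in>reservoirs l m. u (reproduce S Centre w) - u S) \<ge> - real (l * m)" .
    have lm: "real (l * m) > 0" using two_le_l two_le_m by simp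
    have "drift_term (superstar_E k l m) r u S v = r / (l * m) * (\<Sum>w\<in>reservoirs l m. u (reproduce S Centre w) - u S)"
      using Centre True by (simp add: drift_term_Centre fitness_def)
    also have "\<dots> \<ge> r / (l * m) * (- real (l * m))" using h r lm by (intro mult_left_mono) auto
    also have "r / (l * m) * (- real (l * m)) = - r"
    proof -
      have "real (l * m) \<noteq> 0" using two_le_l two_le_m by simp
      thus ?thesis by simp
    qed
    finally show ?thesis using Centre True by (simp add: drift_lb_gone_Centre)
  next
    case False
    have "\<And>w. w \<in> reservoirs l m \<Longrightarrow> reproduce S Centre w = S"
      using False noRes unfolding reproduce_def reservoirs_def by auto
    hence "drift_term (superstar_E k l m) r u S v = 0" using Centre by (simp add: drift_term_Centre)
    thus ?thesis using Centre False by (simp add: drift_lb_gone_Centre)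
  qed
qed

lemma drift_term_ge_lb_gone_Res:
  assumes t: "confined S" and xS: "x \<notin> S" and pos: "0 < pot_gone S" and v: "v \<in> VV"
    and Res: "v = Res i' a"
  shows "drift_term (superstar_E k l m) r u S v \<ge> drift_lb_gone S v"
proof -
  have uS: "u S = pot_gone S" using u_eq_pot[OF t] pos xS unfolding pot_def by simp
  have Bk: "occ S \<subseteq> {..<k}" by (rule occ_subset[OF t])
  have noRes: "\<And>i' a. Res i' a \<notin> S" using confined_Res[OF t] xS by blast
  have ia: "i' < l" "a < m" using v Res by (auto simp: superstar_V_iff)
  have vS: "v \<notin> S" using noRes Res by simp
  have cR: "drift_term (superstar_E k l m) r u S v = u (S - {Path i' 0}) - pot_gone S"
    using Res drift_term_Res[OF ia k] vS uS by (simp add: fitness_def reproduce_def)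
  show ?thesis
  proof (cases "i' = i \<and> 0 \<in> occ S")
    case True
    have base: "u (S - {Path i 0}) \<ge> pot_gone S" using pot_gone_remove_le_u[OF t xS] pot_gone_remove_Path[OF t] by (meson order_trans)
    show ?thesis
    proof (cases "a = a0")
      case True
      have ne: "occ S \<noteq> {}" using \<open>i' = i \<and> 0 \<in> occ S\<close> by auto
      have "min_or k (occ S) = 0" using min_or_le_mem[OF Bk] \<open>i' = i \<and> 0 \<in> occ S\<close> by fastforce
      hence "pot_gone (S - {Path i 0}) \<ge> pot_gone S + \<theta> * r" using pot_gone_remove_first_Path[OF t ne] by simp
      hence "u (S - {Path i 0}) \<ge> pot_gone S + \<theta> * r" using pot_gone_remove_le_u[OF t xS, of "Path i 0"] by simp
      thus ?thesis using cR Res True \<open>i' = i \<and> 0 \<in> occ S\<close> by (simp add: drift_lb_gone_x)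
    next
      case False
      thus ?thesis using cR base Res True by (simp add: drift_lb_gone_Res)
    qed
  next
    case False
    have "Path i' 0 \<notin> S" using False confined_Path[OF t] unfolding occ_def by auto
    hence "S - {Path i' 0} = S" by auto
    hence c0: "drift_term (superstar_E k l m) r u S v = 0" using cR uS by simp
    have "drift_lb_gone S v = 0" using False Res by (cases "i' = i \<and> a = a0") (auto simp: drift_lb_gone_x drift_lb_gone_Res)
    thus ?thesis using c0 by simp
  qed
qed

lemma drift_term_ge_lb_gone_Path_other:
  assumes t: "confined S" and xS: "x \<notin> S" and pos: "0 < pot_gone S" and v: "v \<in> VV"
    and Path: "v = Path i' j" and other: "i' \<noteq> i"
  shows "drift_term (superstar_E k l m) r u S v \<ge> drift_lb_gone S v"
proof -
  have uS: "u S = pot_gone S" using u_eq_pot[OF t] pos xS unfolding pot_def by simp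
  have ij: "i' < l" "j < k" using v Path by (auto simp: superstar_V_iff)
  have vS: "v \<notin> S" using confined_Path[OF t] Path other by auto
  show ?thesis
  proof (cases "Suc j < k")
    case True
    have "Path i' (Suc j) \<notin> S" using confined_Path[OF t] other by auto
    hence "reproduce S v (Path i' (Suc j)) = S" using vS unfolding reproduce_def by auto
    moreover have "drift_lb_gone S v = 0" using Path other ij True by (simp add: drift_lb_gone_Path_other)
    ultimately show ?thesis using drift_term_Path[OF ij(1) True] Path by simp
  next
    case nk: False
    hence jk: "Suc j = k" using ij by simp
    have cP: "drift_term (superstar_E k l m) r u S v = u (S - {Centre}) - pot_gone S"
      using drift_term_Path_last[OF ij(1) jk] Path vS uS by (simp add: fitness_def reproduce_def)
    show ?thesis
    proof (cases "Centre \<in> S")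
      case True
      have "u (S - {Centre}) \<ge> pot_gone S + \<theta>" using pot_gone_remove_le_u[OF t xS, of Centre] pot_gone_remove_Centre[OF True] by simp
      moreover have "drift_lb_gone S v = \<theta>" using Path other ij jk True by (simp add: drift_lb_gone_Path_other)
      ultimately show ?thesis using cP by simp
    next
      case nC: False
      hence "S - {Centre} = S" by auto
      moreover have "drift_lb_gone S v = 0" using Path other ij jk nC by (simp add: drift_lb_gone_Path_other)
      ultimately show ?thesis using cP uS by simp
    qed
  qed
qed

lemma drift_term_ge_lb_gone_Path_own_mutant:
  assumes t: "confined S" and xS: "x \<notin> S" and pos: "0 < pot_gone S" and v: "v \<in> VV"
    and vP: "v = Path i j"
    and jB: "j \<in> occ S"
  shows "drift_term (superstar_E k l m) r u S v \<ge> drift_lb_gone S v"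
proof -
  have uS: "u S = pot_gone S" using u_eq_pot[OF t] pos xS unfolding pot_def by simp
  have Bk: "occ S \<subseteq> {..<k}" by (rule occ_subset[OF t])
  have ij: "i < l" "j < k" using v vP by (auto simp: superstar_V_iff)
  let ?t4 = "(if j = k - 1 then (if k - 1 \<in> occ S \<and> Centre \<notin> S then - r * \<theta> else 0) else 0)"
  let ?t5 = "(if j = min_or k (occ S) - 1 then (if occ S \<noteq> {} \<and> 0 \<notin> occ S then \<theta> * r else 0) else 0)"
  have lbv: "drift_lb_gone S v = ?t4 + ?t5" using vP by (simp add: drift_lb_gone_Path)
  have vS: "v \<in> S" using jB vP unfolding occ_def by simp
  have t5: "?t5 = 0"
  proof (cases "occ S \<noteq> {} \<and> 0 \<notin> occ S \<and> j = min_or k (occ S) - 1")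
    case True
    have "min_or k (occ S) \<le> j" by (rule min_or_le_mem[OF Bk jB])
    moreover have "min_or k (occ S) \<noteq> 0" using min_or_mem[OF Bk] True by fastforce
    ultimately show ?thesis using True by simp
  next
    case False thus ?thesis by auto
  qed
  show ?thesis
  proof (cases "Suc j < k")
    case jk: True
    have t4: "?t4 = 0" using jk by auto
    have "drift_term (superstar_E k l m) r u S v = r * (u (insert (Path i (Suc j)) S) - pot_gone S)"
      using drift_term_Path[OF i jk] vP vS uS by (simp add: fitness_def reproduce_def)
    moreover have "u (insert (Path i (Suc j)) S) \<ge> pot_gone S"
      using pot_gone_le_u[OF confined_insert_Path[OF t jk]] xS pot_gone_insert_Path_Suc[OF t jB] by simp
    ultimately have "drift_term (superstar_E k l m) r u S v \<ge> 0" using r by simp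
    thus ?thesis using lbv t4 t5 by simp
  next
    case False
    hence jk: "Suc j = k" using ij by simp
    have cP: "drift_term (superstar_E k l m) r u S v = r * (u (insert Centre S) - pot_gone S)"
      using drift_term_Path_last[OF i jk] vP vS uS by (simp add: fitness_def reproduce_def)
    show ?thesis
    proof (cases "Centre \<in> S")
      case True
      hence "insert Centre S = S" by auto
      moreover have "?t4 = 0" using True by simp
      ultimately show ?thesis using cP uS lbv t5 by simp
    next
      case nC: False
      have "u (insert Centre S) \<ge> pot_gone S - \<theta>"
        using pot_gone_le_u[OF confined_insert_Centre[OF t]] xS pot_gone_insert_Centre[OF nC] by simp
      hence "r * (- \<theta>) \<le> r * (u (insert Centre S) - pot_gone S)" by (intro mult_left_mono) (use r_pos in simp_all)
      moreover have "?t4 = - r * \<theta>" using jk jB nC by auto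
      ultimately show ?thesis using cP lbv t5 by simp
    qed
  qed
qed

lemma drift_term_ge_lb_gone_Path_own_nonmutant:
  assumes t: "confined S" and xS: "x \<notin> S" and pos: "0 < pot_gone S" and v: "v \<in> VV"
    and vP: "v = Path i j"
    and jB: "j \<notin> occ S"
  shows "drift_term (superstar_E k l m) r u S v \<ge> drift_lb_gone S v"
proof -
  have uS: "u S = pot_gone S" using u_eq_pot[OF t] pos xS unfolding pot_def by simp
  have pr: "0 < \<theta>" using params_pos by auto
  have Bk: "occ S \<subseteq> {..<k}" by (rule occ_subset[OF t])
  have ij: "i < l" "j < k" using v vP by (auto simp: superstar_V_iff)
  let ?t4 = "(if j = k - 1 then (if k - 1 \<in> occ S \<and> Centre \<notin> S then - r * \<theta> else 0) else 0)"
  let ?t5 = "(if j = min_or k (occ S) - 1 then (if occ S \<noteq> {} \<and> 0 \<notin> occ S then \<theta> * r else 0) else 0)"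
  have lbv: "drift_lb_gone S v = ?t4 + ?t5" using vP by (simp add: drift_lb_gone_Path)
  have vS: "v \<notin> S" using jB vP unfolding occ_def by simp
  have t4: "?t4 = 0" using jB by auto
  show ?thesis
  proof (cases "Suc j < k")
    case jk: True
    have cP: "drift_term (superstar_E k l m) r u S v = u (S - {Path i (Suc j)}) - pot_gone S"
      using drift_term_Path[OF i jk] vP vS uS by (simp add: fitness_def reproduce_def)
    have base: "u (S - {Path i (Suc j)}) \<ge> pot_gone S"
      using pot_gone_remove_le_u[OF t xS, of "Path i (Suc j)"] pot_gone_remove_Path[OF t, of "Suc j"] by simp
    show ?thesis
    proof (cases "occ S \<noteq> {} \<and> 0 \<notin> occ S \<and> j = min_or k (occ S) - 1")
      case True
      have ne: "occ S \<noteq> {}" using True by simp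
      have "min_or k (occ S) \<noteq> 0" using min_or_mem[OF Bk ne] True by fastforce
      hence e: "Suc j = min_or k (occ S)" using True by simp
      have a: "pot_gone S + \<theta> * r \<le> pot_gone (S - {Path i (min_or k (occ S))})" by (rule pot_gone_remove_first_Path[OF t ne])
      have b: "pot_gone (S - {Path i (Suc j)}) \<le> u (S - {Path i (Suc j)})" by (rule pot_gone_remove_le_u[OF t xS])
      have c: "drift_term (superstar_E k l m) r u S v \<ge> \<theta> * r" using a b cP unfolding e by simp
      have "?t5 = \<theta> * r" using True by (simp only: if_True simp_thms)
      thus ?thesis using c lbv t4 by simp
    next
      case False
      hence "?t5 = 0" by auto
      thus ?thesis using cP base lbv t4 by simp
    qed
  next
    case False
    hence jk: "Suc j = k" using ij by simp
    have t5: "?t5 = 0"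
    proof (cases "occ S \<noteq> {}")
      case True
      have "min_or k (occ S) \<in> occ S" by (rule min_or_mem[OF Bk True])
      have lk: "min_or k (occ S) < k" using Bk \<open>min_or k (occ S) \<in> occ S\<close> by auto
      have "j \<noteq> min_or k (occ S) - 1"
      proof
        assume e: "j = min_or k (occ S) - 1"
        show False
        proof (cases "min_or k (occ S) = 0")
          case True thus False using e jB \<open>min_or k (occ S) \<in> occ S\<close> by simp
        next
          case False thus False using e lk jk by simp
        qed
      qed
      thus ?thesis by simp
    next
      case False thus ?thesis by auto
    qed
    have cP: "drift_term (superstar_E k l m) r u S v = u (S - {Centre}) - pot_gone S"
      using drift_term_Path_last[OF i jk] vP vS uS by (simp add: fitness_def reproduce_def)
    have "u (S - {Centre}) \<ge> pot_gone S"
    proof (cases "Centre \<in> S")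
      case True thus ?thesis using pot_gone_remove_le_u[OF t xS, of Centre] pot_gone_remove_Centre[OF True] pr by simp
    next
      case False hence "S - {Centre} = S" by auto
      thus ?thesis using uS by simp
    qed
    thus ?thesis using cP lbv t4 t5 by simp
  qed
qed

lemma drift_term_ge_lb_gone_Path_own:
  assumes "confined S" "x \<notin> S" "0 < pot_gone S" "v \<in> VV" "v = Path i j"
  shows "drift_term (superstar_E k l m) r u S v \<ge> drift_lb_gone S v"
  using assms drift_term_ge_lb_gone_Path_own_mutant drift_term_ge_lb_gone_Path_own_nonmutant by blast

lemma drift_term_ge_lb_gone:
  assumes "confined S" "x \<notin> S" "0 < pot_gone S" "v \<in> VV"
  shows "drift_term (superstar_E k l m) r u S v \<ge> drift_lb_gone S v"
proof (cases v)
  case (Path i' j)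
  then show ?thesis
    using assms by (cases "i' = i") (auto intro: drift_term_ge_lb_gone_Path_own drift_term_ge_lb_gone_Path_other)
qed (use assms in \<open>auto intro: drift_term_ge_lb_gone_Centre drift_term_ge_lb_gone_Res\<close>)

lemma drift_nonneg:
  assumes t: "confined S" and pos: "0 < pot S"
  shows "0 \<le> drift VV (superstar_E k l m) r u S"
proof (cases "x \<in> S")
  case True
  then have "0 < pot_x S" using pos unfolding pot_def by simp
  then have "(\<Sum>v\<in>VV. drift_lb_x S v) \<le> drift VV (superstar_E k l m) r u S"
    by (intro drift_ge_sum drift_term_ge_lb_x[OF t True])
  then show ?thesis using drift_lb_x_nonneg[OF t] by linarith
next
  case False
  then have "0 < pot_gone S" using pos unfolding pot_def by simp
  then have "(\<Sum>v\<in>VV. drift_lb_gone S v) \<le> drift VV (superstar_E k l m) r u S"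
    by (intro drift_ge_sum drift_term_ge_lb_gone[OF t False])
  then show ?thesis using drift_lb_gone_nonneg[OF t] by linarith
qed

lemma extinction_prob_x_ge_alpha: "\<alpha> \<le> extinction_prob VV (superstar_E k l m) r {x}"
proof -
  have occ_empty: "occ {} = {}" "occ {x} = {}" unfolding occ_def by auto
  have "confined {x}" unfolding confined_def using x_in_V by simp
  moreover have "pot_x {x} = \<alpha>" unfolding pot_x_def occ_empty min_or_def by simp
  ultimately have u_x: "u {x} = \<alpha>" using params_pos unfolding u_def pot_def by simp
  have "u {x} \<le> extinction_prob VV (superstar_E k l m) r {x}"
  proof (rule superstar_extinction_prob_ge_potential)
    show "0 < k" "0 < l" "0 < m" "0 < r" using k i a0 r by auto
    have "confined {}" unfolding confined_def by simp
    moreover have "pot_gone {} = 1" unfolding pot_gone_def occ_empty min_or_def by simp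
    ultimately show "u {} \<le> 1" unfolding u_def pot_def by simp
    have "Res i (if a0 = 0 then 1 else 0) \<in> VV" using i two_le_m by (simp add: superstar_V_iff)
    then have "\<not> confined VV" unfolding confined_def by (auto split: if_splits)
    then show "u VV = 0" unfolding u_def by simp
    show "{x} \<subseteq> VV" using x_in_V by simp
    fix S assume "0 < u S"
    then have "confined S" "0 < pot S" unfolding u_def by (auto split: if_splits)
    then show "0 \<le> drift VV (superstar_E k l m) r u S" by (rule drift_nonneg)
  qed
  then show ?thesis using u_x by simp
qed
end

lemma extinction_prob_Res_ge_large_l:
  assumes "0 < k" "1 < r" "i < l" "a0 < m" "4 * r \<le> real m - 1" "2 * r * (r * k + 1) \<le> real l - 1"
  shows "1 / (64 * r^3 * (r * k + 1)) \<le> extinction_prob (superstar_V k l m) (superstar_E k l m) r {Res i a0}"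
proof -
  interpret reservoir_potential k l m r i a0 using assms by unfold_locales auto
  show ?thesis using extinction_prob_x_ge_alpha unfolding \<alpha>_def .
qed

section \<open>Combining the bounds\<close>

text \<open>Here K, L, M stand for k, l, m and T for the sum of the extinction probabilities. When M is
  large, the lower bounds c L K, c M and c L M / K for T give T^3 \<ge> c^3 (L M)^2, while
  n \<le> 3 L M.\<close>

lemma cube_le_of_bounds:
  fixes T c K L M :: real
  assumes c: "0 < c" and L: "1 \<le> L" and M: "1 \<le> M" and K: "K > 0"
    and hX: "c * (L * K) \<le> T" and hY: "c * M \<le> T" and hZ: "c * (L * M / K) \<le> T"
  shows "c^3 * (L * M)^2 \<le> T^3"
proof -
  have "0 \<le> c * M" using c M by simp
  hence T0: "0 \<le> T" using hY by linarith
  have "(c * (L * K)) * (c * (L * M / K)) \<le> T * T"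
    using hX hZ c L M K T0 by (intro mult_mono) (auto intro!: mult_nonneg_nonneg divide_nonneg_nonneg)
  moreover have "(c * (L * K)) * (c * (L * M / K)) = c^2 * (L^2 * M)"
    using K by (simp add: field_simps power2_eq_square)
  ultimately have T2: "c^2 * (L^2 * M) \<le> T^2" by (simp add: power2_eq_square)
  show ?thesis
  proof (cases "M \<le> L^2")
    case True
    have "(c^2 * (L^2 * M)) * (c * M) \<le> T^2 * T"
      using T2 hY c M by (intro mult_mono) auto
    moreover have "(c^2 * (L^2 * M)) * (c * M) = c^3 * (L * M)^2"
      by (simp add: power2_eq_square power3_eq_cube algebra_simps)
    ultimately show ?thesis by (simp add: power2_eq_square power3_eq_cube algebra_simps)
  next
    case False
    have "(c * M)^3 \<le> T^3" using hY c M by (intro power_mono) auto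
    moreover have "c^3 * (L * M)^2 \<le> (c * M)^3"
    proof -
      have "L^2 * M^2 \<le> M * M^2" using False by (intro mult_right_mono) auto
      hence "c^3 * (L^2 * M^2) \<le> c^3 * (M * M^2)" using c by (intro mult_left_mono) auto
      thus ?thesis by (simp add: power2_eq_square power3_eq_cube algebra_simps)
    qed
    ultimately show ?thesis by linarith
  qed
qed

lemma powr_two_thirds_le_of_small_M:
  fixes K L M T r :: real
  defines "n \<equiv> L * (K + M) + 1" and "C \<equiv> (1 + r) * (3 + 4 * r) + 384 * r^4"
  assumes r: "1 < r" and K: "1 \<le> K" and L: "1 \<le> L" and M: "1 \<le> M"
    and TP: "L * K / (1 + r) \<le> T" and small: "M \<le> K \<or> M - 1 < 4 * r"
  shows "n powr (2/3) / C \<le> T"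
proof -
  have n1: "1 \<le> n" unfolding n_def using K L M by (simp add: add_nonneg_nonneg)
  have C0: "0 < C" unfolding C_def using r by (simp add: add_pos_pos)
  have "1 * 1 \<le> L * K" using K L by (intro mult_mono) auto
  hence LK1: "1 \<le> L * K" by simp
  have npow: "n powr (2/3) \<le> n"
  proof -
    have "n powr (2/3) \<le> n powr 1" using n1 by (intro powr_mono) auto
    thus ?thesis using n1 by simp
  qed
  have nb: "n \<le> (3 + 4 * r) * (L * K)"
  proof (cases "M \<le> K")
    case True
    have "n \<le> L * (K + K) + 1" unfolding n_def using True L by (simp add: mult_left_mono)
    also have "\<dots> \<le> 3 * (L * K)" using LK1 by (simp add: algebra_simps)
    also have "\<dots> \<le> (3 + 4 * r) * (L * K)" using r LK1 by (intro mult_right_mono) auto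
    finally show ?thesis .
  next
    case False
    hence Mr: "M \<le> 4 * r + 1" using small by linarith
    have "n = L * K + L * M + 1" unfolding n_def by (simp add: algebra_simps)
    also have "L * M \<le> L * (4 * r + 1)" using Mr L by (intro mult_left_mono) auto
    also have "L \<le> L * K" using L K by (metis mult_le_cancel_left1 less_le_not_le order_trans zero_le_one mult_1_right)
    hence "L * (4 * r + 1) \<le> (L * K) * (4 * r + 1)" using r by (intro mult_right_mono) auto
    finally have "n \<le> L * K + (L * K) * (4 * r + 1) + L * K" using LK1 by linarith
    thus ?thesis by (simp add: algebra_simps)
  qed
  have "n / C \<le> n / ((1 + r) * (3 + 4 * r))"
    using n1 r C0 unfolding C_def by (intro divide_left_mono) (auto intro!: mult_pos_pos)
  also have "\<dots> \<le> L * K / (1 + r)"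
    using nb r by (simp add: divide_simps mult.commute mult.left_commute)
  finally have "n / C \<le> T" using TP by linarith
  moreover have "n powr (2/3) / C \<le> n / C" using npow C0 by (intro divide_right_mono) auto
  ultimately show ?thesis by linarith
qed

lemma powr_two_thirds_le_of_cube_le:
  fixes n c T X :: real
  assumes n1: "1 \<le> n" and c0: "0 < c" and T0: "0 \<le> T" and nX: "n \<le> 3 * X"
    and cube: "c^3 * X^2 \<le> T^3"
  shows "n powr (2/3) * c / 3 \<le> T"
proof (rule ccontr)
  assume "\<not> ?thesis"
  then have "T^3 < (n powr (2/3) * c / 3)^3" using T0 by (intro power_strict_mono) auto
  also have "(n powr (2/3) * c / 3)^3 = (n powr (2/3))^3 * c^3 / 27"
    by (simp add: power_mult_distrib power_divide)
  also have "(n powr (2/3))^3 = n^2"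
  proof -
    have p: "0 < n powr (2/3)" using n1 by simp
    have "(n powr (2/3))^3 = (n powr (2/3)) powr (real 3)" using powr_realpow[OF p, of 3] by simp
    also have "\<dots> = n powr (2/3 * real 3)" by (simp only: powr_powr)
    also have "\<dots> = n^2" using powr_realpow[of n 2] n1 by simp
    finally show ?thesis .
  qed
  also have "n^2 * c^3 / 27 \<le> (3 * X)^2 * c^3 / 27"
    using nX n1 c0 by (intro divide_right_mono mult_right_mono power_mono) auto
  also have "(3 * X)^2 * c^3 / 27 = (c^3 * X^2) / 3" by (simp add: power2_eq_square)
  also have "\<dots> \<le> T^3 / 3" using cube by simp
  finally have "T^3 < T^3 / 3" .
  moreover have "0 \<le> T^3" using T0 by simp
  ultimately show False by linarith
qed

lemma powr_two_thirds_le_of_large_M: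
  fixes K L M T r :: real
  defines "n \<equiv> L * (K + M) + 1" and "C \<equiv> (1 + r) * (3 + 4 * r) + 384 * r^4"
  assumes r: "1 < r" and K: "1 \<le> K" and L: "1 \<le> L" and M: "1 \<le> M"
    and T: "L * K / (1 + r) + L * M * g \<le> T" and g: "0 \<le> g"
    and KM: "K < M"
    and g1: "1 / (3 * r^2 * L) \<le> g" and g2: "1 / (128 * r^4 * K) \<le> g"
  shows "n powr (2/3) / C \<le> T"
proof -
  have n1: "1 \<le> n" unfolding n_def using K L M by (simp add: add_nonneg_nonneg)
  have C0: "0 < C" unfolding C_def using r by (simp add: add_pos_pos)
  have "1 * 1 \<le> L * K" using K L by (intro mult_mono) auto
  hence LK1: "1 \<le> L * K" by simp
  have "1 * 1 \<le> L * M" using M L by (intro mult_mono) auto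
  hence LM1: "1 \<le> L * M" by simp
  have r4: "1 \<le> r^4" using r by (simp add: one_le_power)
  have "0 \<le> L * M * g" using L M g by simp
  then have TP: "L * K / (1 + r) \<le> T" using T by linarith
  define c where "c = 1 / (128 * r^4)"
  have c0: "0 < c" unfolding c_def using r by simp
  have LK0: "0 \<le> L * K / (1 + r)" using L K r by simp
  have hX: "c * (L * K) \<le> T"
  proof -
    have "r^1 \<le> r^4" using r by (intro power_increasing) auto
    hence "1 + r \<le> 128 * r^4" using r r4 by simp
    hence "c \<le> 1 / (1 + r)" unfolding c_def using r by (intro divide_left_mono) auto
    hence "c * (L * K) \<le> (1 / (1 + r)) * (L * K)" using LK1 by (intro mult_right_mono) auto
    hence "c * (L * K) \<le> L * K / (1 + r)" by simp
    thus ?thesis using TP by linarith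
  qed
  have hY: "c * M \<le> T"
  proof -
    have "L * M * (1 / (3 * r^2 * L)) \<le> L * M * g" using g1 L M by (intro mult_left_mono) auto
    moreover have "L * M * (1 / (3 * r^2 * L)) = M / (3 * r^2)" using L by simp
    moreover have "c * M \<le> M / (3 * r^2)"
    proof -
      have "3 * r^2 \<le> 128 * r^4"
      proof -
        have "r^2 \<le> r^4" using r by (intro power_increasing) auto
        moreover have "0 \<le> r^2" by simp
        ultimately show ?thesis by linarith
      qed
      hence "c \<le> 1 / (3 * r^2)" unfolding c_def using r by (intro divide_left_mono) auto
      hence "c * M \<le> (1 / (3 * r^2)) * M" using M by (intro mult_right_mono) auto
      thus ?thesis by simp
    qed
    ultimately show ?thesis using T LK0 by linarith
  qed
  have hZ: "c * (L * M / K) \<le> T"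
  proof -
    have "L * M * (1 / (128 * r^4 * K)) \<le> L * M * g" using g2 L M by (intro mult_left_mono) auto
    moreover have "L * M * (1 / (128 * r^4 * K)) = c * (L * M / K)" unfolding c_def by simp
    moreover have "0 \<le> L * K / (1 + r)" using L K r by simp
    ultimately show ?thesis using T by linarith
  qed
  have cube: "c^3 * (L * M)^2 \<le> T^3" by (rule cube_le_of_bounds[OF c0 L M _ hX hY hZ]) (use K in simp)
  have nLM: "n \<le> 3 * (L * M)"
  proof -
    have "n \<le> L * (M + M) + 1" unfolding n_def using KM L by (simp add: mult_left_mono)
    thus ?thesis using LM1 by (simp add: algebra_simps)
  qed
  have "0 \<le> c * M" using c0 M by simp
  hence T0: "0 \<le> T" using hY by linarith
  have "n powr (2/3) * c / 3 \<le> T" by (rule powr_two_thirds_le_of_cube_le[OF n1 c0 T0 nLM cube])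
  moreover have "n powr (2/3) / C \<le> n powr (2/3) * c / 3"
  proof -
    have "3 / c \<le> C" unfolding c_def C_def using r by (simp add: add_nonneg_nonneg mult_nonneg_nonneg)
    hence "1 / C \<le> c / 3" using c0 C0 by (simp add: divide_simps mult.commute)
    hence "n powr (2/3) * (1 / C) \<le> n powr (2/3) * (c / 3)" by (intro mult_left_mono) auto
    thus ?thesis by simp
  qed
  ultimately show ?thesis by linarith
qed

lemma powr_two_thirds_le_of_bounds:
  fixes K L M T r g :: real
  assumes r: "1 < r" and K: "1 \<le> K" and L: "1 \<le> L" and M: "1 \<le> M"
    and T: "L * K / (1 + r) + L * M * g \<le> T" and g: "0 \<le> g"
    and gb: "4 * r \<le> M - 1 \<Longrightarrow> 1 / (3 * r^2 * L) \<le> g \<and> 1 / (128 * r^4 * K) \<le> g"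
  shows "(L * (K + M) + 1) powr (2/3) / ((1 + r) * (3 + 4 * r) + 384 * r^4) \<le> T"
proof (cases "M \<le> K \<or> M - 1 < 4 * r")
  case True
  have "0 \<le> L * M * g" using L M g by simp
  then have "L * K / (1 + r) \<le> T" using T by linarith
  then show ?thesis using powr_two_thirds_le_of_small_M[OF r K L M _ True] by simp
next
  case False
  then show ?thesis
    using gb powr_two_thirds_le_of_large_M[OF r K L M T g] by auto
qed
lemma extinction_prob_Res_ge_inv_l:
  assumes k: "0 < k" and l: "0 < l" and m: "0 < m" and r: "1 < r" and i: "i < l" and a: "a < m"
  shows "1 / (3 * r^2 * l) \<le> extinction_prob (superstar_V k l m) (superstar_E k l m) r {Res i a}"
proof -
  have "1 + l * r * (r + 1) \<le> 3 * r^2 * l"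
  proof -
    have "r * (r + 1) \<le> 2 * r^2" using r by (simp add: power2_eq_square algebra_simps)
    hence "l * (r * (r + 1)) \<le> l * (2 * r^2)" by (intro mult_left_mono) auto
    moreover have "1 \<le> r^2 * l"
    proof -
      have "1 \<le> r^2" using r by (simp add: one_le_power)
      moreover have "1 \<le> real l" using l by simp
      ultimately have "1 * 1 \<le> r^2 * l" by (intro mult_mono) auto
      thus ?thesis by simp
    qed
    ultimately show ?thesis by (simp add: algebra_simps)
  qed
  moreover have "0 < 1 + real l * r * (r + 1)"
  proof -
    have "0 \<le> real l * r * (r + 1)" using r by simp
    thus ?thesis by simp
  qed
  moreover have "0 < 3 * r^2 * real l" using r l by simp
  ultimately have "1 / (3 * r^2 * l) \<le> 1 / (1 + l * r * (r + 1))"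
    using l by (intro divide_left_mono mult_pos_pos) auto
  thus ?thesis using extinction_prob_Res_ge_inv_l_small[OF k _ i a] r by (meson order_trans less_trans zero_less_one)
qed

lemma extinction_prob_Res_ge_inv_k:
  assumes k: "0 < k" and l: "0 < l" and m: "0 < m" and r: "1 < r" and i: "i < l" and a: "a < m"
    and mr: "4 * r \<le> real m - 1"
  shows "1 / (128 * r^4 * k) \<le> extinction_prob (superstar_V k l m) (superstar_E k l m) r {Res i a}"
proof -
  have K: "1 \<le> real k" using k by simp
  have rk1: "1 \<le> r * k"
  proof -
    have "1 * 1 \<le> r * k" using r K by (intro mult_mono) auto
    thus ?thesis by simp
  qed
  have r2: "r \<le> r^2" "r^2 \<le> r^3" "r^3 \<le> r^4"
    using power_increasing[of 1 2 r] power_increasing[of 2 3 r] power_increasing[of 3 4 r] r by auto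
  show ?thesis
  proof (cases "2 * r * (r * k + 1) \<le> real l - 1")
    case True
    have f: "1 / (64 * r^3 * (r * k + 1)) \<le> extinction_prob (superstar_V k l m) (superstar_E k l m) r {Res i a}"
      by (rule extinction_prob_Res_ge_large_l[OF k r i a mr True])
    have "64 * r^3 * (r * k + 1) \<le> 128 * r^4 * k"
    proof -
      have "r * k + 1 \<le> 2 * (r * k)" using rk1 by simp
      hence "64 * r^3 * (r * k + 1) \<le> 64 * r^3 * (2 * (r * k))" using r by (intro mult_left_mono) auto
      also have "\<dots> = 128 * r^4 * k" by (simp add: power_Suc algebra_simps power3_eq_cube power4_eq_xxxx)
      finally show ?thesis .
    qed
    hence "1 / (128 * r^4 * k) \<le> 1 / (64 * r^3 * (r * k + 1))"
      using r rk1 k by (intro divide_left_mono) (auto intro!: mult_pos_pos)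
    thus ?thesis using f by linarith
  next
    case False
    hence L: "real l \<le> 2 * r * (r * k + 1) + 1" by simp
    have "3 * r^2 * l \<le> 128 * r^4 * k"
    proof -
      have "3 * r^2 * l \<le> 3 * r^2 * (2 * r * (r * k + 1) + 1)" using L r by (intro mult_left_mono) auto
      also have "\<dots> = 6 * (r^4 * k) + 6 * r^3 + 3 * r^2"
        by (simp add: algebra_simps power2_eq_square power3_eq_cube power4_eq_xxxx)
      also have "\<dots> \<le> 6 * (r^4 * k) + 6 * (r^4 * k) + 3 * (r^4 * k)"
      proof -
        have "r^4 * 1 \<le> r^4 * k" using K r by (intro mult_left_mono) auto
        hence "r^3 \<le> r^4 * k" using r2 by simp
        moreover have "r^2 \<le> r^4 * k" using r2 \<open>r^3 \<le> r^4 * k\<close> by linarith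
        ultimately show ?thesis by linarith
      qed
      also have "\<dots> \<le> 128 * r^4 * k" using r by simp
      finally show ?thesis .
    qed
    hence "1 / (128 * r^4 * k) \<le> 1 / (3 * r^2 * l)"
      using r l k by (intro divide_left_mono) (auto intro!: mult_pos_pos)
    thus ?thesis using extinction_prob_Res_ge_inv_l[OF k l m r i a] by linarith
  qed
qed

lemma sum_extinction_prob_ge:
  assumes k: "0 < k" and l: "0 < l" and m: "0 < m" and r: "1 < r" and g: "0 \<le> g"
    and gR: "\<And>i a. i < l \<Longrightarrow> a < m \<Longrightarrow> g \<le> extinction_prob (superstar_V k l m) (superstar_E k l m) r {Res i a}"
  shows "l * k / (1 + r) + l * m * g \<le> (\<Sum>x\<in>superstar_V k l m. extinction_prob (superstar_V k l m) (superstar_E k l m) r {x})"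
proof -
  let ?V = "superstar_V k l m" and ?E = "superstar_E k l m"
  define PS where "PS = superstar_paths k l"
  have PSV: "PS \<subseteq> ?V" unfolding PS_def superstar_V_eq by auto
  have RV: "reservoirs l m \<subseteq> ?V" unfolding superstar_V_eq by auto
  have gd: "valid_moran ?V ?E r" using valid_moran_superstar[OF k l m] r by simp
  have "(\<Sum>x\<in>?V. (if x \<in> PS then 1 / (1 + r) else 0) + (if x \<in> reservoirs l m then g else 0))
      \<le> (\<Sum>x\<in>?V. extinction_prob ?V ?E r {x})"
  proof (rule sum_mono)
    fix x assume xV: "x \<in> ?V"
    have f0: "0 \<le> extinction_prob ?V ?E r {x}" using extinction_prob_bounds[OF gd] xV by simp
    show "(if x \<in> PS then 1 / (1 + r) else 0) + (if x \<in> reservoirs l m then g else 0) \<le> extinction_prob ?V ?E r {x}"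
    proof (cases x)
      case (Res i a)
      hence ia: "i < l" "a < m" using xV by (auto simp: superstar_V_iff)
      have "x \<notin> PS" "x \<in> reservoirs l m" using Res ia unfolding PS_def superstar_paths_def reservoirs_def by auto
      thus ?thesis using gR[OF ia] Res by simp
    next
      case (Path i j)
      hence ij: "i < l" "j < k" using xV by (auto simp: superstar_V_iff)
      have "x \<in> PS" "x \<notin> reservoirs l m" using Path ij unfolding PS_def superstar_paths_def reservoirs_def by auto
      thus ?thesis using extinction_prob_Path_ge[OF k l m _ ij] r Path by simp
    next
      case Centre
      have "x \<notin> PS" "x \<notin> reservoirs l m" using Centre unfolding PS_def superstar_paths_def reservoirs_def by auto
      thus ?thesis using f0 by simp
    qed
  qed
  moreover have "(\<Sum>x\<in>?V. (if x \<in> PS then 1 / (1 + r) else 0) + (if x \<in> reservoirs l m then g else 0))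
      = l * k / (1 + r) + l * m * g"
    unfolding sum.distrib sum_superstar_V_indicator[OF PSV] sum_superstar_V_indicator[OF RV] card_reservoirs
    using card_superstar_paths[of k l] unfolding PS_def by (simp add: mult.commute)
  ultimately show ?thesis by simp
qed

definition superstar_const :: "real \<Rightarrow> real" where
  "superstar_const r = (1 + r) * (3 + 4 * r) + 384 * r^4"

lemma superstar_const_pos: "1 < r \<Longrightarrow> 0 < superstar_const r"
  unfolding superstar_const_def by (simp add: add_pos_pos)

lemma sum_extinction_prob_ge_powr:
  assumes k: "0 < k" and l: "0 < l" and m: "0 < m" and r: "1 < r"
  shows "real (l * (k + m) + 1) powr (2/3) / superstar_const r
    \<le> (\<Sum>x\<in>superstar_V k l m. extinction_prob (superstar_V k l m) (superstar_E k l m) r {x})"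
proof -
  define g where "g = (if 4 * r \<le> real m - 1 then max (1 / (3 * r^2 * l)) (1 / (128 * r^4 * k))
    else 1 / (3 * r^2 * l))"
  have g0: "0 \<le> g" unfolding g_def using r by (auto simp: max_def)
  have "g \<le> extinction_prob (superstar_V k l m) (superstar_E k l m) r {Res i a}" if "i < l" "a < m" for i a
    unfolding g_def using extinction_prob_Res_ge_inv_l[OF k l m r that] extinction_prob_Res_ge_inv_k[OF k l m r that]
    by auto
  then have T: "real l * real k / (1 + r) + real l * real m * g
      \<le> (\<Sum>x\<in>superstar_V k l m. extinction_prob (superstar_V k l m) (superstar_E k l m) r {x})"
    by (rule sum_extinction_prob_ge[OF k l m r g0])
  have gb: "4 * r \<le> real m - 1 \<Longrightarrow> 1 / (3 * r^2 * l) \<le> g \<and> 1 / (128 * r^4 * k) \<le> g"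
    unfolding g_def by auto
  have "(real l * (real k + real m) + 1) powr (2/3) / superstar_const r
      \<le> (\<Sum>x\<in>superstar_V k l m. extinction_prob (superstar_V k l m) (superstar_E k l m) r {x})"
    unfolding superstar_const_def
    by (rule powr_two_thirds_le_of_bounds[OF r _ _ _ T g0 gb]) (use k l m in auto)
  then show ?thesis by (simp add: add.commute)
qed

lemma inverse_powr_third_le_of_powr_two_thirds_le:
  fixes n C T :: real
  assumes n: "3 \<le> n" and C: "0 < C" and T: "n powr (2/3) / C \<le> T"
  shows "1 / (C * (n * ln n) powr (1/3)) \<le> T / n"
proof -
  have n0: "0 < n" using n by simp
  have p: "0 < n powr (1/3)" "0 < n powr (2/3)" using n0 by auto
  have "n = n powr (2/3) * n powr (1/3)" using n0 by (simp flip: powr_add)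
  then have "1 / (C * n powr (1/3)) = n powr (2/3) / C / n"
    using p C by (simp add: field_simps)
  also have "\<dots> \<le> T / n" using T n0 by (intro divide_right_mono) auto
  finally have A: "1 / (C * n powr (1/3)) \<le> T / n" .
  have "1 \<le> ln n" using ln3_gt_1 n by (smt (verit) ln_le_cancel_iff)
  then have "n powr (1/3) \<le> (n * ln n) powr (1/3)"
    using n0 by (intro powr_mono2) (auto simp: mult_le_cancel_left1)
  then have "1 / (C * (n * ln n) powr (1/3)) \<le> 1 / (C * n powr (1/3))"
    using p C by (intro divide_left_mono mult_left_mono mult_pos_pos) auto
  then show ?thesis using A by linarith
qed

theorem theorem4p1:
  fixes r :: real
  assumes "r > 1"
  shows "\<exists>c>0. \<forall>k l m :: nat. 0 < k \<longrightarrow> 0 < l \<longrightarrow> 0 < m \<longrightarrow>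
           (let n = l * (k + m) + 1 in
              (\<Sum>x\<in>superstar_V k l m. extinction_prob (superstar_V k l m) (superstar_E k l m) r {x})
                / real n
              \<ge> 1 / (c * (real n * ln (real n)) powr (1/3)))"
proof (intro exI[of _ "superstar_const r"] conjI allI impI)
  show C: "0 < superstar_const r" using superstar_const_pos[OF assms] .
  fix k l m :: nat assume k: "0 < k" and l: "0 < l" and m: "0 < m"
  have "1 * 2 \<le> l * (k + m)" using k l m by (intro mult_mono) auto
  then have "(3::real) \<le> real (l * (k + m) + 1)" by linarith
  from inverse_powr_third_le_of_powr_two_thirds_le[OF this C sum_extinction_prob_ge_powr[OF k l m assms]]
  show "let n = l * (k + m) + 1 in
      1 / (superstar_const r * (real n * ln (real n)) powr (1/3))
    \<le> (\<Sum>x\<in>superstar_V k l m. extinction_prob (superstar_V k l m) (superstar_E k l m) r {x}) / real n"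
    by (simp add: Let_def)
qed

end
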